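(* Every regular hyperbolic odd-gon in $\mathbb{H}^2$ is reduced.
   Context: A hyperbolic regular $k$-gon ($k\ge 3$) is the convex hull of $k$ points $v_1,\dots,v_k$ on a hyperbolic circle in $\mathbb{H}^2$ with $|v_1v_2|=\dots=|v_{k-1}v_k|=|v_kv_1|$. A convex body in $\mathbb{H}^2$ is a compact convex set with nonempty interior. For a line $H$ supporting a convex body $C$, $\mathrm{width}_H(C)$ is the distance between $H$ and a farthest line ultraparallel to $H$ supporting $C$; the thickness $\Delta(C)$ is the minimum of $\mathrm{width}_H(C)$ over supporting lines $H$. A convex body $R$ is reduced if $\Delta(Z)<\Delta(R)$ for every convex body $Z$ properly contained in $R$. *)

theory Defs
  imports "HOL-Analysis.Analysis"
begin

text \<open>The hyperbolic plane is modelled by the Beltrami--Klein model: the open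
unit disk in the complex plane (viewed as the Euclidean plane).  Hyperbolic
lines are the (open) chords of the disk, hence hyperbolic convexity is
Euclidean convexity inside the disk.\<close>

definition hdisk :: "complex set" where
  "hdisk = {x. norm x < 1}"

definition hdist :: "complex \<Rightarrow> complex \<Rightarrow> real" where
  "hdist x y = arcosh ((1 - x \<bullet> y) / sqrt ((1 - (norm x)\<^sup>2) * (1 - (norm y)\<^sup>2)))"

text \<open>The hyperbolic line cut out by the Euclidean line x.a = b
  (which meets the open disk iff a \<noteq> 0 and |b| < |a|).\<close>
definition hline :: "complex \<Rightarrow> real \<Rightarrow> complex set" where
  "hline a b = {x. norm x < 1 \<and> x \<bullet> a = b}"

definition valid_line :: "complex \<Rightarrow> real \<Rightarrow> bool" where
  "valid_line a b \<longleftrightarrow> a \<noteq> 0 \<and> \<bar>b\<bar> < norm a"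

definition is_hline :: "complex set \<Rightarrow> bool" where
  "is_hline L \<longleftrightarrow> (\<exists>a b. valid_line a b \<and> L = hline a b)"

text \<open>Ultraparallel lines: their closures in the closed disk are disjoint
  (they neither meet nor share an ideal endpoint).\<close>
definition ultraparallel :: "complex set \<Rightarrow> complex set \<Rightarrow> bool" where
  "ultraparallel L L' \<longleftrightarrow>
     (\<exists>a b a' b'. valid_line a b \<and> valid_line a' b' \<and> L = hline a b \<and> L' = hline a' b' \<and>
        \<not> (\<exists>x. norm x \<le> 1 \<and> x \<bullet> a = b \<and> x \<bullet> a' = b'))"

definition supports :: "complex set \<Rightarrow> complex set \<Rightarrow> bool" where
  "supports L C \<longleftrightarrow>
     (\<exists>a b. valid_line a b \<and> L = hline a b \<and> C \<subseteq> {x. x \<bullet> a \<le> b} \<and> L \<inter> C \<noteq> {})"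

definition hsetdist :: "complex set \<Rightarrow> complex set \<Rightarrow> real" where
  "hsetdist A B = Inf {hdist x y | x y. x \<in> A \<and> y \<in> B}"

definition convex_body :: "complex set \<Rightarrow> bool" where
  "convex_body C \<longleftrightarrow> C \<subseteq> hdisk \<and> compact C \<and> convex C \<and> interior C \<noteq> {}"

definition hwidth :: "complex set \<Rightarrow> complex set \<Rightarrow> real" where
  "hwidth H C = Sup {hsetdist H H' | H'. supports H' C \<and> ultraparallel H H'}"

definition thickness :: "complex set \<Rightarrow> real" where
  "thickness C = Inf {hwidth H C | H. supports H C}"

definition reduced :: "complex set \<Rightarrow> bool" where
  "reduced R \<longleftrightarrow> convex_body R \<and>
     (\<forall>Z. convex_body Z \<and> Z \<subset> R \<longrightarrow> thickness Z < thickness R)"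

definition hcircle :: "complex \<Rightarrow> real \<Rightarrow> complex set" where
  "hcircle c r = {x \<in> hdisk. hdist c x = r}"

definition regular_polygon :: "nat \<Rightarrow> complex set \<Rightarrow> bool" where
  "regular_polygon k P \<longleftrightarrow> k \<ge> 3 \<and>
     (\<exists>c r v. c \<in> hdisk \<and> r > 0 \<and> (\<forall>i<k. v i \<in> hcircle c r) \<and> inj_on v {..<k} \<and>
        (\<forall>i<k. hdist (v i) (v (Suc i mod k)) = hdist (v 0) (v 1)) \<and>
        P = convex hull (v ` {..<k}))"

end

theory Submission
  imports Defs
begin

(*
  Work in the Minkowski model: a point x of the Klein disk lifts to the unit timelike
  vector hpoint x in R^2 x R, and the line {x. x . a = b} has the spacelike normal (a, b).
  Then cosh of the distance of two points is minus the Minkowski product of their lifts,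
  and for a unit normal N the number height N x is the sinh of the signed distance from x
  to the line.

  A Lorentz boost moves the centre of the regular k-gon P to the origin, where the lifted
  vertices become (sinh r * u i, cosh r) with the u i a rotated copy of the k-th roots of
  unity. As k is odd, the vertices project onto every direction with a spread of at least
  1 + cos (pi / k), one of them within pi / k of that direction; in terms of heights, every
  supporting line of P has a vertex at height at least T, so the thickness of P is at least
  arsinh T = arcosh (sqrt (1 + T^2)).

  A convex body Z properly inside P misses some vertex v j. Since the sets of points at
  height at most T over a line are convex, all of P except v j lies at height less than T
  over the side opposite to v j, so Z lies at height at most some T' < T. Tilting that side
  towards v j until it touches Z yields a supporting line of Z over which Z still has height
  at most T', hence the thickness of Z is at most arsinh T' < arsinh T.
*)

section \<open>The Minkowski model\<close>

definition mink :: "complex \<times> real \<Rightarrow> complex \<times> real \<Rightarrow> real" where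
  "mink X Y = fst X \<bullet> fst Y - snd X * snd Y"

lemma mink_Pair [simp]: "mink (x, t) (y, s) = x \<bullet> y - t * s"
  by (simp add: mink_def)

lemma mink_commute: "mink X Y = mink Y X"
  by (simp add: mink_def inner_commute mult.commute)

lemma mink_add_right: "mink X (Y + Z) = mink X Y + mink X Z"
  and mink_add_left: "mink (Y + Z) X = mink Y X + mink Z X"
  and mink_diff_right: "mink X (Y - Z) = mink X Y - mink X Z"
  and mink_diff_left: "mink (Y - Z) X = mink Y X - mink Z X"
  and mink_scaleR_right: "mink X (r *\<^sub>R Y) = r * mink X Y"
  and mink_scaleR_left: "mink (r *\<^sub>R Y) X = r * mink Y X"
  by (simp_all add: mink_def inner_add_right inner_add_left inner_diff_right inner_diff_left
      algebra_simps)

lemmas mink_simps = mink_add_right mink_add_left mink_diff_right mink_diff_left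
  mink_scaleR_right mink_scaleR_left

lemma mink_reverse_cauchy_schwarz:
  assumes "mink X X < 0"
  shows "mink X X * mink Y Y \<le> (mink X Y)\<^sup>2"
proof -
  obtain x t where X: "X = (x, t)" by fastforce
  obtain s where s: "snd Y = s" by blast
  have "t \<noteq> 0"
    using assms inner_ge_zero[of x] unfolding X by force
  define l where "l = - s / t"
  \<comment> \<open>Y + l X has vanishing time component, so it is spacelike.\<close>
  have "0 \<le> mink (Y + l *\<^sub>R X) (Y + l *\<^sub>R X)"
    using \<open>t \<noteq> 0\<close> by (simp add: mink_def X s l_def)
  also have "\<dots> = mink Y Y + 2 * l * mink X Y + l\<^sup>2 * mink X X"
    by (simp add: mink_simps mink_commute[of Y X] power2_eq_square algebra_simps)
  finally have "mink X X * (mink Y Y + 2 * l * mink X Y + l\<^sup>2 * mink X X) \<le> 0"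
    using assms by (simp add: mult_nonpos_nonneg)
  moreover have "0 \<le> (mink X X * l + mink X Y)\<^sup>2"
    by simp
  ultimately show ?thesis
    by (simp add: power2_eq_square algebra_simps)
qed

lemma mink_self_pos_iff_valid_line: "0 < mink (a, b) (a, b) \<longleftrightarrow> valid_line a b"
proof -
  have "0 < mink (a, b) (a, b) \<longleftrightarrow> b\<^sup>2 < (norm a)\<^sup>2"
    by (simp add: dot_square_norm power2_eq_square)
  also have "\<dots> \<longleftrightarrow> \<bar>b\<bar> < norm a"
    using abs_le_square_iff[of "norm a" b] by auto
  finally show ?thesis
    by (auto simp: valid_line_def)
qed

lemma one_minus_norm_sq_pos: "norm x < 1 \<Longrightarrow> 0 < 1 - (norm x)\<^sup>2"
  by (simp add: abs_square_less_1)

lemma inner_less_one: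
  fixes x y :: complex
  assumes "norm x < 1" "norm y \<le> 1"
  shows "x \<bullet> y < 1"
proof -
  have "x \<bullet> y \<le> norm x * norm y"
    by (rule norm_cauchy_schwarz)
  also have "\<dots> \<le> norm x"
    using assms by (simp add: mult_left_le)
  finally show ?thesis
    using assms by linarith
qed

definition hpoint :: "complex \<Rightarrow> complex \<times> real" where
  "hpoint x = (1 / sqrt (1 - (norm x)\<^sup>2)) *\<^sub>R (x, 1)"

lemma mink_hpoint_left: "mink (hpoint x) N = mink (x, 1) N / sqrt (1 - (norm x)\<^sup>2)"
  unfolding hpoint_def mink_scaleR_left by simp

lemma mink_hpoint_self:
  assumes "norm x < 1"
  shows "mink (hpoint x) (hpoint x) = -1"
proof -
  have "mink (hpoint x) (hpoint x) = - (1 - (norm x)\<^sup>2) / (sqrt (1 - (norm x)\<^sup>2))\<^sup>2"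
    unfolding hpoint_def mink_scaleR_left mink_scaleR_right
    by (simp add: dot_square_norm power2_eq_square)
  then show ?thesis
    using one_minus_norm_sq_pos[OF assms] by (simp add: divide_eq_minus_1_iff)
qed

lemma hpoint_inject:
  assumes "norm x < 1" "hpoint x = hpoint y"
  shows "x = y"
proof -
  have "snd (hpoint y) = 1 / sqrt (1 - (norm x)\<^sup>2)" "0 < 1 / sqrt (1 - (norm x)\<^sup>2)"
    using assms one_minus_norm_sq_pos[of x] by (simp_all add: hpoint_def)
  moreover have "fst (hpoint z) = snd (hpoint z) *\<^sub>R z" for z
    by (simp add: hpoint_def)
  ultimately show ?thesis
    using assms(2) by (metis less_irrefl scaleR_cancel_left)
qed

lemma sqrt_one_minus_norm_sq_mult_le:
  fixes x y :: complex
  assumes "norm x < 1" "norm y < 1"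
  shows "sqrt (1 - (norm x)\<^sup>2) * sqrt (1 - (norm y)\<^sup>2) \<le> 1 - x \<bullet> y"
proof -
  have "mink (x, 1) (x, 1) < 0"
    using assms by (simp add: dot_square_norm abs_square_less_1)
  from mink_reverse_cauchy_schwarz[OF this, of "(y, 1)"]
  have "(1 - (norm x)\<^sup>2) * (1 - (norm y)\<^sup>2) \<le> (1 - x \<bullet> y)\<^sup>2"
    by (simp add: dot_square_norm power2_commute[of "x \<bullet> y"] algebra_simps)
  then show ?thesis
    using inner_less_one[of x y] assms by (simp add: real_le_lsqrt real_sqrt_mult[symmetric])
qed

definition hcosh :: "complex \<Rightarrow> complex \<Rightarrow> real" where
  "hcosh x y = - mink (hpoint x) (hpoint y)"

lemma hcosh_eq: "hcosh x y = (1 - x \<bullet> y) / sqrt ((1 - (norm x)\<^sup>2) * (1 - (norm y)\<^sup>2))"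
  unfolding hcosh_def hpoint_def mink_scaleR_left mink_scaleR_right
  by (simp add: real_sqrt_mult ac_simps minus_divide_left)

lemma hdist_hcosh: "hdist x y = arcosh (hcosh x y)"
  by (simp add: hdist_def hcosh_eq)

lemma hcosh_commute: "hcosh x y = hcosh y x"
  by (simp add: hcosh_def mink_commute)

lemma hcosh_self: "norm x < 1 \<Longrightarrow> hcosh x x = 1"
  by (simp add: hcosh_def mink_hpoint_self)

lemma hcosh_ge_one:
  assumes "norm x < 1" "norm y < 1"
  shows "1 \<le> hcosh x y"
  using sqrt_one_minus_norm_sq_mult_le[OF assms] one_minus_norm_sq_pos[OF assms(1)]
    one_minus_norm_sq_pos[OF assms(2)]
  by (simp add: hcosh_eq real_sqrt_mult le_divide_eq)

lemma cosh_hdist: "norm x < 1 \<Longrightarrow> norm y < 1 \<Longrightarrow> cosh (hdist x y) = hcosh x y"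
  by (simp add: hdist_hcosh hcosh_ge_one)

lemma hdist_nonneg: "norm x < 1 \<Longrightarrow> norm y < 1 \<Longrightarrow> 0 \<le> hdist x y"
  by (simp add: hdist_hcosh hcosh_ge_one)

lemma hcosh_le_of_norm_le:
  fixes x y :: complex
  assumes "norm x \<le> \<rho>" "norm y \<le> \<rho>" "\<rho> < 1"
  shows "hcosh x y \<le> 2 / (1 - \<rho>\<^sup>2)"
proof -
  have "0 \<le> \<rho>"
    by (rule order_trans[OF norm_ge_zero assms(1)])
  then have \<rho>: "0 \<le> \<rho>" "\<rho>\<^sup>2 < 1"
    using assms(3) by (auto simp: abs_square_less_1)
  have "1 - x \<bullet> y \<le> 2"
    using Cauchy_Schwarz_ineq2[of x y] mult_mono[of "norm x" 1 "norm y" 1] assms by auto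
  moreover have "1 - \<rho>\<^sup>2 \<le> sqrt ((1 - (norm x)\<^sup>2) * (1 - (norm y)\<^sup>2))"
  proof -
    have xy: "(norm x)\<^sup>2 \<le> \<rho>\<^sup>2" "(norm y)\<^sup>2 \<le> \<rho>\<^sup>2"
      using assms by (simp_all add: power_mono)
    have "(1 - \<rho>\<^sup>2) * (1 - \<rho>\<^sup>2) \<le> (1 - (norm x)\<^sup>2) * (1 - (norm y)\<^sup>2)"
      by (intro mult_mono) (use xy \<rho> in linarith)+
    then show ?thesis
      using \<rho> by (simp add: real_le_rsqrt power2_eq_square)
  qed
  moreover have "0 < 1 - x \<bullet> y"
    using inner_less_one[of x y] assms by simp
  ultimately show ?thesis
    unfolding hcosh_eq using \<rho> by (intro frac_le) auto
qed

text \<open>For a unit normal \<open>N\<close> (\<open>mink N N = 1\<close>) of the line \<open>{x. mink (x, 1) N = 0}\<close>,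
  \<open>height N x\<close> is the sinh of the signed distance from \<open>x\<close> to that line, positive on
  the side \<open>mink (x, 1) N < 0\<close>.\<close>

definition height :: "complex \<times> real \<Rightarrow> complex \<Rightarrow> real" where
  "height N x = - mink (hpoint x) N"

lemma height_eq: "height N x = - mink (x, 1) N / sqrt (1 - (norm x)\<^sup>2)"
  by (simp add: height_def mink_hpoint_left del: mink_Pair)

lemma height_hpoint: "height (hpoint y) x = hcosh x y"
  by (simp add: height_def hcosh_def)

lemma height_diff: "height (N - M) x = height N x - height M x"
  and height_scaleR: "height (s *\<^sub>R N) x = s * height N x"
  by (simp_all add: height_def mink_simps)

lemma height_nonneg_iff: "norm x < 1 \<Longrightarrow> 0 \<le> height N x \<longleftrightarrow> mink (x, 1) N \<le> 0"
  and height_eq_0_iff: "norm x < 1 \<Longrightarrow> height N x = 0 \<longleftrightarrow> mink (x, 1) N = 0"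
  using one_minus_norm_sq_pos[of x]
  by (simp_all add: height_eq zero_le_divide_iff divide_le_0_iff del: mink_Pair)

lemma height_less_iff:
  assumes "norm x < 1"
  shows "height N x < T \<longleftrightarrow> - mink (x, 1) N - T * sqrt (1 - (norm x)\<^sup>2) < 0"
proof -
  have "0 < sqrt (1 - (norm x)\<^sup>2)"
    using one_minus_norm_sq_pos[OF assms] by simp
  then show ?thesis
    unfolding height_eq by (subst pos_divide_less_eq) auto
qed

lemma height_eq_iff:
  assumes "norm x < 1"
  shows "height N x = T \<longleftrightarrow> - mink (x, 1) N - T * sqrt (1 - (norm x)\<^sup>2) = 0"
proof -
  have "sqrt (1 - (norm x)\<^sup>2) \<noteq> 0"
    using one_minus_norm_sq_pos[OF assms] by simp
  then show ?thesis
    unfolding height_eq by (subst nonzero_divide_eq_eq) auto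
qed

lemma continuous_on_height: "C \<subseteq> hdisk \<Longrightarrow> continuous_on C (height N)"
  unfolding height_eq[abs_def] mink_def
  by (intro continuous_intros) (auto simp: hdisk_def dest!: one_minus_norm_sq_pos)

lemma hpoint_on_line_iff: "mink (hpoint x) N = 0 \<longleftrightarrow> mink (x, 1) N = 0" if "norm x < 1"
  using height_eq_0_iff[OF that, of N] by (simp add: height_def)

lemma snd_pos_if_mink_hpoint_neg:
  assumes F: "mink F F < 0" and y: "norm y < 1" and Fy: "mink F (hpoint y) < 0"
  shows "0 < snd F"
proof (rule ccontr)
  obtain f t where Ft: "F = (f, t)" by fastforce
  assume "\<not> 0 < snd F"
  then have "t \<le> 0" by (simp add: Ft)
  have "(norm f)\<^sup>2 < t\<^sup>2"
    using F by (simp add: Ft dot_square_norm power2_eq_square)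
  then have "norm f < - t"
    using \<open>t \<le> 0\<close> power2_less_imp_less[of "norm f" "- t"] by simp
  moreover have "- norm f \<le> f \<bullet> y"
    using Cauchy_Schwarz_ineq2[of f y] mult_left_le[of "norm y" "norm f"] y by auto
  moreover have "mink (y, 1) F < 0"
    using Fy one_minus_norm_sq_pos[OF y]
    by (simp add: mink_commute[of F] mink_hpoint_left divide_less_0_iff del: mink_Pair)
  then have "f \<bullet> y - t < 0"
    by (simp add: Ft inner_commute)
  ultimately show False by (simp add: inner_commute)
qed

lemma timelike_normalize:
  assumes F: "mink F F < 0" "0 < snd F"
  obtains x where "norm x < 1" "hpoint x = (1 / sqrt (- mink F F)) *\<^sub>R F"
proof
  define t where "t = snd F"
  define x where "x = fst F /\<^sub>R t"
  have t: "0 < t" using F by (simp add: t_def)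
  have Fx: "F = t *\<^sub>R (x, 1)"
    using t by (simp add: x_def t_def prod_eq_iff)
  have "mink F F = t\<^sup>2 * ((norm x)\<^sup>2 - 1)"
    unfolding Fx mink_scaleR_left mink_scaleR_right by (simp add: dot_square_norm power2_eq_square)
  then have q: "1 - (norm x)\<^sup>2 = - mink F F / t\<^sup>2"
    using t by (simp add: field_simps)
  have "0 < 1 - (norm x)\<^sup>2"
    unfolding q using F t by (simp add: divide_neg_pos)
  then show "norm x < 1"
    by (simp add: abs_square_less_1)
  have "sqrt (1 - (norm x)\<^sup>2) = sqrt (- mink F F) / t"
    unfolding q real_sqrt_divide using t by simp
  then show "hpoint x = (1 / sqrt (- mink F F)) *\<^sub>R F"
    using t F by (simp add: hpoint_def Fx)
qed

lemma exists_foot: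
  assumes y: "norm y < 1" and N: "0 < mink N N"
  obtains x where "norm x < 1" "mink (x, 1) N = 0"
    "hcosh x y = sqrt (1 + (height N y)\<^sup>2 / mink N N)"
proof -
  define h where "h = height N y"
  define D where "D = 1 + h\<^sup>2 / mink N N"
  \<comment> \<open>the projection of \<open>hpoint y\<close> onto the orthogonal complement of \<open>N\<close>\<close>
  define F where "F = hpoint y + (h / mink N N) *\<^sub>R N"
  have D: "0 < D"
    using N by (simp add: D_def add_pos_nonneg)
  have yN: "mink (hpoint y) N = - h"
    by (simp add: h_def height_def)
  have FN: "mink F N = 0"
    using N by (simp add: F_def mink_simps yN)
  have FF: "mink F F = - D" and Fy: "mink F (hpoint y) = - D"
    using N by (simp_all add: F_def D_def mink_simps mink_hpoint_self[OF y] yN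
        mink_commute[of N "hpoint y"] power2_eq_square field_simps)
  obtain x where x: "norm x < 1" "hpoint x = (1 / sqrt D) *\<^sub>R F"
    using timelike_normalize[of F] FF Fy D snd_pos_if_mink_hpoint_neg[OF _ y, of F] by auto
  show thesis
  proof
    show "norm x < 1" by (fact x(1))
    have "mink (hpoint x) N = 0"
      by (simp add: x(2) mink_scaleR_left FN)
    then show "mink (x, 1) N = 0"
      using hpoint_on_line_iff[OF x(1)] by blast
    have "hcosh x y = D / sqrt D"
      by (simp add: hcosh_def x(2) mink_scaleR_left Fy)
    then show "hcosh x y = sqrt (1 + (height N y)\<^sup>2 / mink N N)"
      using D by (simp add: D_def h_def real_div_sqrt)
  qed
qed

lemma one_plus_height_sq_le_hcosh_sq:
  assumes x: "norm x < 1" "mink (x, 1) N = 0" and y: "norm y < 1" and N: "0 < mink N N"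
  shows "1 + (height N y)\<^sup>2 / mink N N \<le> (hcosh x y)\<^sup>2"
proof -
  define h where "h = height N y"
  define Y where "Y = hpoint y + (h / mink N N) *\<^sub>R N"
  have xN: "mink (hpoint x) N = 0"
    using hpoint_on_line_iff x by blast
  have yN: "mink (hpoint y) N = - h"
    by (simp add: h_def height_def)
  have "mink (hpoint x) Y = - hcosh x y"
    by (simp add: Y_def hcosh_def mink_simps xN)
  moreover have "mink Y Y = - 1 - h\<^sup>2 / mink N N"
    using N by (simp add: Y_def mink_simps mink_hpoint_self[OF y] yN mink_commute[of N "hpoint y"]
        power2_eq_square field_simps)
  moreover have "mink (hpoint x) (hpoint x) < 0"
    by (simp add: mink_hpoint_self[OF x(1)])
  ultimately show ?thesis
    using mink_reverse_cauchy_schwarz[of "hpoint x" Y]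
    by (simp add: mink_hpoint_self[OF x(1)] h_def)
qed

section \<open>Supporting lines and widths\<close>

lemma arcosh_mono: "1 \<le> x \<Longrightarrow> x \<le> y \<Longrightarrow> arcosh x \<le> arcosh (y::real)"
  using arcosh_less_iff_real[of y x] by (simp add: not_less[symmetric])

lemma hline_subset_hdisk: "hline a b \<subseteq> hdisk"
  by (auto simp: hline_def hdisk_def)

lemma hline_nonempty:
  assumes "valid_line a b"
  shows "hline a b \<noteq> {}"
proof -
  have a: "a \<noteq> 0" "\<bar>b\<bar> < norm a"
    using assms by (auto simp: valid_line_def)
  define p where "p = (b / (norm a)\<^sup>2) *\<^sub>R a"
  have "p \<bullet> a = b"
    using a by (simp add: p_def dot_square_norm)
  moreover have "norm p < 1"
    using a by (simp add: p_def power2_eq_square divide_less_eq)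
  ultimately show ?thesis
    by (auto simp: hline_def)
qed

lemma hsetdist_le:
  assumes "H \<subseteq> hdisk" "H' \<subseteq> hdisk" "x \<in> H" "y \<in> H'"
  shows "hsetdist H H' \<le> hdist x y"
  unfolding hsetdist_def
proof (rule cInf_lower)
  show "hdist x y \<in> {hdist x y |x y. x \<in> H \<and> y \<in> H'}"
    using assms by blast
  show "bdd_below {hdist x y |x y. x \<in> H \<and> y \<in> H'}"
    by (rule bdd_belowI[of _ 0]) (use assms in \<open>auto simp: hdisk_def intro!: hdist_nonneg\<close>)
qed

lemma hsetdist_ge:
  assumes "H \<noteq> {}" "H' \<noteq> {}" "\<And>x y. x \<in> H \<Longrightarrow> y \<in> H' \<Longrightarrow> d \<le> hdist x y"
  shows "d \<le> hsetdist H H'"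
  unfolding hsetdist_def by (rule cInf_greatest) (use assms in auto)

lemma hsetdist_nonneg:
  assumes "H \<subseteq> hdisk" "H' \<subseteq> hdisk" "H \<noteq> {}" "H' \<noteq> {}"
  shows "0 \<le> hsetdist H H'"
  by (rule hsetdist_ge) (use assms in \<open>auto simp: hdisk_def intro!: hdist_nonneg\<close>)

lemma supports_hlineI:
  assumes "valid_line a b" "\<forall>x\<in>C. x \<bullet> a \<le> b" "p \<in> C" "norm p < 1" "p \<bullet> a = b"
  shows "supports (hline a b) C"
  unfolding supports_def hline_def using assms by blast

lemma supportsE:
  assumes "supports H C"
  obtains a b p where "valid_line a b" "H = hline a b" "\<forall>x\<in>C. x \<bullet> a \<le> b" "p \<in> C" "p \<in> H"
  using assms unfolding supports_def by blast

lemma exists_height_max: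
  assumes "compact C" "C \<noteq> {}" "C \<subseteq> hdisk"
  obtains w where "w \<in> C" "\<forall>x\<in>C. height N x \<le> height N w"
  using continuous_attains_sup[OF assms(1,2) continuous_on_height[OF assms(3)]] by blast

text \<open>The normal of the line through \<open>w\<close> that is perpendicular to the perpendicular
  dropped from \<open>w\<close> onto the line with normal \<open>N\<close>.\<close>

definition normal_through :: "complex \<times> real \<Rightarrow> complex \<Rightarrow> complex \<times> real" where
  "normal_through N w = height N w *\<^sub>R hpoint w - N"

lemma height_normal_through: "height (normal_through N w) x = height N w * hcosh x w - height N x"
  by (simp add: normal_through_def height_diff height_scaleR height_hpoint)

lemma height_normal_through_self: "norm w < 1 \<Longrightarrow> height (normal_through N w) w = 0"
  by (simp add: height_normal_through hcosh_self)

lemma mink_normal_through: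
  assumes "norm w < 1"
  shows "mink (normal_through N w) (normal_through N w) = (height N w)\<^sup>2 + mink N N"
proof -
  define f where "f = height N w"
  have "mink (normal_through N w) (normal_through N w)
      = f\<^sup>2 * mink (hpoint w) (hpoint w) - 2 * f * mink (hpoint w) N + mink N N"
    unfolding normal_through_def f_def[symmetric]
    by (simp add: mink_simps mink_commute[of N "hpoint w"] power2_eq_square algebra_simps
        del: mink_Pair)
  then show ?thesis
    by (simp add: mink_hpoint_self[OF assms] f_def height_def power2_eq_square)
qed

lemma mink_normal_through_neg:
  assumes w: "norm w < 1" "0 < height N w" and x: "norm x \<le> 1" "mink (x, 1) N = 0"
  shows "mink (x, 1) (normal_through N w) < 0"
proof -
  have "mink (x, 1) (hpoint w) = (x \<bullet> w - 1) / sqrt (1 - (norm w)\<^sup>2)"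
    by (simp add: mink_commute[of "(x, 1)"] mink_hpoint_left inner_commute)
  then have "mink (x, 1) (normal_through N w) = height N w / sqrt (1 - (norm w)\<^sup>2) * (x \<bullet> w - 1)"
    using x(2) by (simp add: normal_through_def mink_simps del: mink_Pair)
  moreover have "x \<bullet> w < 1"
    using inner_less_one[OF w(1) x(1)] by (simp add: inner_commute)
  moreover have "0 < sqrt (1 - (norm w)\<^sup>2)"
    using one_minus_norm_sq_pos[OF w(1)] by simp
  ultimately show ?thesis
    using w(2) by (simp add: mult_pos_neg divide_neg_pos)
qed

lemma hsetdist_normal_through_ge:
  assumes ab: "valid_line a b" and w: "norm w < 1" "0 < height (a, b) w"
    and N': "normal_through (a, b) w = (a', b')"
  shows "arcosh (sqrt (1 + (height (a, b) w)\<^sup>2 / mink (a, b) (a, b)))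
    \<le> hsetdist (hline a b) (hline a' b')"
proof (rule hsetdist_ge)
  define N where "N = (a, b)"
  define f where "f = height N w"
  have n: "0 < mink N N"
    using ab unfolding N_def by (rule mink_self_pos_iff_valid_line[THEN iffD2])
  show "hline a b \<noteq> {}"
    using ab by (rule hline_nonempty)
  have "height (a', b') w = 0"
    using height_normal_through_self[OF w(1)] N' by metis
  then show "hline a' b' \<noteq> {}"
    using height_eq_0_iff[OF w(1), of "(a', b')"] w(1) by (auto simp: hline_def)
  fix x y
  assume x: "x \<in> hline a b" and y: "y \<in> hline a' b'"
  have xd: "norm x < 1" "mink (x, 1) N = 0" and yd: "norm y < 1" "height (a', b') y = 0"
    using x y height_eq_0_iff[of y] by (auto simp: hline_def N_def)
  have "f \<le> f * hcosh y w"
    using w hcosh_ge_one[OF yd(1) w(1)] by (simp add: f_def N_def)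
  also have "\<dots> = height N y"
    using height_normal_through[of N w y] yd(2) N' by (simp add: f_def N_def)
  finally have "f\<^sup>2 \<le> (height N y)\<^sup>2"
    using w by (intro power_mono) (auto simp: f_def N_def)
  then have "f\<^sup>2 / mink N N \<le> (height N y)\<^sup>2 / mink N N"
    using n by (intro divide_right_mono) auto
  then have "1 + f\<^sup>2 / mink N N \<le> (hcosh x y)\<^sup>2"
    using one_plus_height_sq_le_hcosh_sq[OF xd yd(1) n] by simp
  then have "sqrt (1 + f\<^sup>2 / mink N N) \<le> hcosh x y"
    using hcosh_ge_one[OF xd(1) yd(1)] by (simp add: real_le_lsqrt)
  moreover have "1 \<le> sqrt (1 + f\<^sup>2 / mink N N)"
    using n by simp
  ultimately show "arcosh (sqrt (1 + (height (a, b) w)\<^sup>2 / mink (a, b) (a, b))) \<le> hdist x y"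
    using arcosh_mono by (simp add: hdist_hcosh f_def N_def)
qed

lemma exists_ultraparallel_support:
  assumes C: "C \<subseteq> hdisk" and ab: "valid_line a b" "\<forall>x\<in>C. x \<bullet> a \<le> b"
    and w: "w \<in> C" "\<forall>x\<in>C. height (a, b) x \<le> height (a, b) w" "0 < height (a, b) w"
  obtains H' where "supports H' C" "ultraparallel (hline a b) H'"
    "arcosh (sqrt (1 + (height (a, b) w)\<^sup>2 / mink (a, b) (a, b))) \<le> hsetdist (hline a b) H'"
proof -
  define N where "N = (a, b)"
  obtain a' b' where N': "normal_through N w = (a', b')"
    by fastforce
  have wd: "norm w < 1"
    using w C by (auto simp: hdisk_def)
  have "0 < mink N N"
    using ab(1) unfolding N_def by (rule mink_self_pos_iff_valid_line[THEN iffD2])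
  then have valid': "valid_line a' b'"
    using mink_normal_through[OF wd, of N] N'
    by (simp add: mink_self_pos_iff_valid_line[symmetric] add_nonneg_pos)
  have C_side: "x \<bullet> a' \<le> b'" if "x \<in> C" for x
  proof -
    have xd: "norm x < 1"
      using that C by (auto simp: hdisk_def)
    have "height N x \<le> height N w * 1"
      using w that by (simp add: N_def)
    also have "\<dots> \<le> height N w * hcosh x w"
      using w hcosh_ge_one[OF xd wd] by (intro mult_left_mono) (auto simp: N_def)
    finally have "0 \<le> height (normal_through N w) x"
      by (simp add: height_normal_through)
    then show ?thesis
      using height_nonneg_iff[OF xd] by (simp add: N')
  qed
  have "w \<bullet> a' = b'"
    using height_normal_through_self[OF wd, of N] height_eq_0_iff[OF wd] by (simp add: N')
  then have "supports (hline a' b') C"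
    using valid' C_side w(1) wd by (intro supports_hlineI) auto
  moreover have "ultraparallel (hline a b) (hline a' b')"
    using mink_normal_through_neg[OF wd, of N] w(3) ab(1) valid' N'
    unfolding ultraparallel_def by (fastforce simp: N_def)
  moreover have "arcosh (sqrt (1 + (height (a, b) w)\<^sup>2 / mink (a, b) (a, b)))
      \<le> hsetdist (hline a b) (hline a' b')"
    using hsetdist_normal_through_ge[OF ab(1) wd w(3)] N' by (simp add: N_def)
  ultimately show thesis
    using that by blast
qed

definition hwidth_set :: "complex set \<Rightarrow> complex set \<Rightarrow> real set" where
  "hwidth_set H C = {hsetdist H H' | H'. supports H' C \<and> ultraparallel H H'}"

lemma hwidth_eq_Sup: "hwidth H C = Sup (hwidth_set H C)"
  by (simp add: hwidth_def hwidth_set_def)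

lemma bdd_above_hwidth_set:
  assumes C: "compact C" "C \<subseteq> hdisk" and H: "H \<subseteq> hdisk" "p \<in> H"
  shows "bdd_above (hwidth_set H C)"
proof -
  have "compact (insert p C)" "insert p C \<noteq> {}"
    using C by auto
  then obtain z where z: "z \<in> insert p C" "\<forall>y\<in>insert p C. norm y \<le> norm z"
    using continuous_attains_sup[of "insert p C" norm] by (auto intro: continuous_intros)
  have "norm z < 1"
    using z(1) C H by (auto simp: hdisk_def)
  show ?thesis
  proof (rule bdd_aboveI)
    fix s
    assume "s \<in> hwidth_set H C"
    then obtain H' where s: "s = hsetdist H H'" and "supports H' C"
      by (auto simp: hwidth_set_def)
    then obtain a' b' q where H': "H' = hline a' b'" "q \<in> C" "q \<in> H'"
      by (elim supportsE) blast
    have "s \<le> hdist p q"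
      unfolding s using H H' hline_subset_hdisk by (intro hsetdist_le) auto
    also have "\<dots> \<le> arcosh (2 / (1 - (norm z)\<^sup>2))"
      unfolding hdist_hcosh using z H' H C \<open>norm z < 1\<close>
      by (intro arcosh_mono hcosh_ge_one hcosh_le_of_norm_le) (auto simp: hdisk_def)
    finally show "s \<le> arcosh (2 / (1 - (norm z)\<^sup>2))" .
  qed
qed

lemma hwidth_set_nonneg:
  assumes "H \<subseteq> hdisk" "H \<noteq> {}" "s \<in> hwidth_set H C"
  shows "0 \<le> s"
proof -
  obtain H' where s: "s = hsetdist H H'" and "supports H' C"
    using assms(3) by (auto simp: hwidth_set_def)
  then obtain a' b' where "valid_line a' b'" "H' = hline a' b'"
    by (elim supportsE)
  then show ?thesis
    unfolding s using hsetdist_nonneg[OF assms(1) hline_subset_hdisk assms(2) hline_nonempty]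
    by simp
qed

lemma hwidth_set_nonempty:
  assumes C: "convex_body C" and H: "supports H C"
  shows "hwidth_set H C \<noteq> {}"
proof -
  have Cd: "C \<subseteq> hdisk" and "compact C" and Ci: "interior C \<noteq> {}"
    using C by (auto simp: convex_body_def)
  obtain a b p where ab: "valid_line a b" "H = hline a b" "\<forall>x\<in>C. x \<bullet> a \<le> b"
    using H by (elim supportsE)
  have "C \<noteq> {}"
    using Ci by auto
  obtain w where w: "w \<in> C" "\<forall>x\<in>C. height (a, b) x \<le> height (a, b) w"
    using exists_height_max[OF \<open>compact C\<close> \<open>C \<noteq> {}\<close> Cd] by blast
  have "0 < height (a, b) w"
  proof (rule ccontr)
    assume "\<not> 0 < height (a, b) w"
    have "x \<bullet> a = b" if "x \<in> C" for x
    proof -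
      have xd: "norm x < 1"
        using that Cd by (auto simp: hdisk_def)
      have "height (a, b) x \<le> 0"
        using w(2) that \<open>\<not> 0 < height (a, b) w\<close> by fastforce
      moreover have "0 \<le> height (a, b) x"
        using height_nonneg_iff[OF xd] ab(3) that by simp
      ultimately show ?thesis
        using height_eq_0_iff[OF xd, of "(a, b)"] by simp
    qed
    then have "interior C \<subseteq> interior {x. a \<bullet> x = b}"
      by (intro interior_mono) (auto simp: inner_commute)
    moreover have "a \<noteq> 0"
      using ab(1) by (simp add: valid_line_def)
    ultimately show False
      using Ci by simp
  qed
  then obtain H' where "supports H' C" "ultraparallel H H'"
    using exists_ultraparallel_support[OF Cd ab(1,3) w] ab(2) by blast
  then show ?thesis
    by (auto simp: hwidth_set_def)
qed

lemma hwidth_nonneg: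
  assumes "convex_body C" "supports H C"
  shows "0 \<le> hwidth H C"
proof -
  obtain a b p where H: "H = hline a b" "p \<in> H"
    using assms(2) by (elim supportsE)
  have "compact C" "C \<subseteq> hdisk"
    using assms(1) by (auto simp: convex_body_def)
  then have "bdd_above (hwidth_set H C)"
    using bdd_above_hwidth_set hline_subset_hdisk H by metis
  moreover obtain s where "s \<in> hwidth_set H C"
    using hwidth_set_nonempty[OF assms] by blast
  moreover have "0 \<le> s" if "s \<in> hwidth_set H C" for s
    using hwidth_set_nonneg[OF _ _ that] hline_subset_hdisk H by blast
  ultimately show ?thesis
    unfolding hwidth_eq_Sup by (meson cSup_upper2)
qed

lemma arcosh_le_hwidth:
  assumes C: "convex_body C" and ab: "valid_line a b" "\<forall>x\<in>C. x \<bullet> a \<le> b"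
    and p: "p \<in> C" "T * sqrt (mink (a, b) (a, b)) \<le> height (a, b) p" and T: "0 < T"
  shows "arcosh (sqrt (1 + T\<^sup>2)) \<le> hwidth (hline a b) C"
proof -
  have Cd: "C \<subseteq> hdisk" and "compact C"
    using C by (auto simp: convex_body_def)
  define n where "n = mink (a, b) (a, b)"
  have n: "0 < n"
    using ab(1) unfolding n_def by (rule mink_self_pos_iff_valid_line[THEN iffD2])
  obtain w where w: "w \<in> C" "\<forall>x\<in>C. height (a, b) x \<le> height (a, b) w"
    using exists_height_max[OF \<open>compact C\<close> _ Cd] p(1) by blast
  have Tw: "T * sqrt n \<le> height (a, b) w"
    using p w(2) by (fastforce simp: n_def)
  moreover have "0 < T * sqrt n"
    using T n by simp
  ultimately have "0 < height (a, b) w"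
    by linarith
  then obtain H' where H': "supports H' C" "ultraparallel (hline a b) H'"
    "arcosh (sqrt (1 + (height (a, b) w)\<^sup>2 / n)) \<le> hsetdist (hline a b) H'"
    using exists_ultraparallel_support[OF Cd ab w] by (auto simp: n_def)
  have "(T * sqrt n)\<^sup>2 \<le> (height (a, b) w)\<^sup>2"
    using Tw T n by (intro power_mono) auto
  then have "T\<^sup>2 \<le> (height (a, b) w)\<^sup>2 / n"
    using n by (simp add: power_mult_distrib le_divide_eq)
  then have "arcosh (sqrt (1 + T\<^sup>2)) \<le> arcosh (sqrt (1 + (height (a, b) w)\<^sup>2 / n))"
    by (intro arcosh_mono) auto
  also have "\<dots> \<le> hwidth (hline a b) C"
    unfolding hwidth_eq_Sup
  proof (rule cSup_upper2)
    show "hsetdist (hline a b) H' \<in> hwidth_set (hline a b) C"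
      using H' by (auto simp: hwidth_set_def)
    obtain p0 where "p0 \<in> hline a b"
      using hline_nonempty[OF ab(1)] by blast
    then show "bdd_above (hwidth_set (hline a b) C)"
      by (rule bdd_above_hwidth_set[OF \<open>compact C\<close> Cd hline_subset_hdisk])
  qed (use H' in simp)
  finally show ?thesis .
qed

lemma hwidth_le_arcosh:
  assumes C: "convex_body C" and H: "supports (hline a b) C" and ab: "\<forall>x\<in>C. x \<bullet> a \<le> b"
    and n: "1 \<le> mink (a, b) (a, b)" and bound: "\<forall>x\<in>C. height (a, b) x \<le> T"
  shows "hwidth (hline a b) C \<le> arcosh (sqrt (1 + T\<^sup>2))"
  unfolding hwidth_eq_Sup
proof (rule cSup_least)
  show "hwidth_set (hline a b) C \<noteq> {}"
    by (rule hwidth_set_nonempty[OF C H])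
  have Cd: "C \<subseteq> hdisk"
    using C by (simp add: convex_body_def)
  fix s
  assume "s \<in> hwidth_set (hline a b) C"
  then obtain H' where s: "s = hsetdist (hline a b) H'" and "supports H' C"
    by (auto simp: hwidth_set_def)
  then obtain a' b' q where H': "H' = hline a' b'" "q \<in> C" "q \<in> H'"
    by (elim supportsE) blast
  have qd: "norm q < 1"
    using H' Cd by (auto simp: hdisk_def)
  obtain x where x: "norm x < 1" "mink (x, 1) (a, b) = 0"
    "hcosh x q = sqrt (1 + (height (a, b) q)\<^sup>2 / mink (a, b) (a, b))"
    using exists_foot[OF qd, of "(a, b)"] n by auto
  have "0 \<le> height (a, b) q"
    using ab H' height_nonneg_iff[OF qd, of "(a, b)"] by auto
  then have "(height (a, b) q)\<^sup>2 \<le> T\<^sup>2"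
    using bound H' by (intro power_mono) auto
  moreover have "(height (a, b) q)\<^sup>2 / mink (a, b) (a, b) \<le> (height (a, b) q)\<^sup>2"
    using n by (simp add: divide_le_eq mult_le_cancel_left1)
  ultimately have "hcosh x q \<le> sqrt (1 + T\<^sup>2)"
    unfolding x(3) by simp
  then have "hdist x q \<le> arcosh (sqrt (1 + T\<^sup>2))"
    unfolding hdist_hcosh by (intro arcosh_mono hcosh_ge_one x(1) qd)
  moreover have "s \<le> hdist x q"
    unfolding s using x H' Cd hline_subset_hdisk by (intro hsetdist_le) (auto simp: hline_def)
  ultimately show "s \<le> arcosh (sqrt (1 + T\<^sup>2))"
    by simp
qed

lemma exists_supports:
  assumes "convex_body C"
  shows "\<exists>H. supports H C"
proof -
  have Cd: "C \<subseteq> hdisk" and "compact C" "C \<noteq> {}"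
    using assms by (auto simp: convex_body_def)
  have "continuous_on C (\<lambda>x. x \<bullet> 1)"
    by (intro continuous_intros)
  then obtain w where w: "w \<in> C" "\<forall>x\<in>C. x \<bullet> 1 \<le> w \<bullet> 1"
    using continuous_attains_sup[OF \<open>compact C\<close> \<open>C \<noteq> {}\<close>] by blast
  have wd: "norm w < 1"
    using w Cd by (auto simp: hdisk_def)
  have "\<bar>w \<bullet> 1\<bar> < norm (1::complex)"
    using Cauchy_Schwarz_ineq2[of w 1] wd by simp
  then have "valid_line 1 (w \<bullet> 1)"
    by (simp add: valid_line_def)
  then show ?thesis
    using w wd by (blast intro: supports_hlineI)
qed

lemma thickness_le_hwidth:
  assumes "convex_body C" "supports H C"
  shows "thickness C \<le> hwidth H C"
  unfolding thickness_def
proof (rule cInf_lower)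
  show "hwidth H C \<in> {hwidth H C |H. supports H C}"
    using assms(2) by blast
  show "bdd_below {hwidth H C |H. supports H C}"
    using hwidth_nonneg[OF assms(1)] by (auto intro: bdd_belowI[of _ 0])
qed

lemma le_thickness:
  assumes "convex_body C" "\<And>H. supports H C \<Longrightarrow> d \<le> hwidth H C"
  shows "d \<le> thickness C"
  unfolding thickness_def using exists_supports[OF assms(1)] assms(2)
  by (intro cInf_greatest) auto

section \<open>Heights over convex hulls\<close>

lemma convex_hdisk: "convex hdisk"
  by (simp add: hdisk_def convex_ball[of 0 1, unfolded ball_def, simplified dist_0_norm])

lemma convex_hull_subset_hdisk: "V \<subseteq> hdisk \<Longrightarrow> convex hull V \<subseteq> hdisk"
  by (rule hull_minimal) (auto simp: convex_hdisk)

lemma sqrt_one_minus_norm_sq_concave: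
  fixes x y :: complex
  assumes x: "norm x < 1" and y: "norm y < 1" and t: "0 \<le> t" "t \<le> 1"
  shows "(1 - t) * sqrt (1 - (norm x)\<^sup>2) + t * sqrt (1 - (norm y)\<^sup>2)
    \<le> sqrt (1 - (norm ((1 - t) *\<^sub>R x + t *\<^sub>R y))\<^sup>2)"
proof -
  define z where "z = (1 - t) *\<^sub>R x + t *\<^sub>R y"
  have "z \<in> hdisk"
    unfolding z_def using x y t by (intro convexD[OF convex_hdisk]) (auto simp: hdisk_def)
  then have zd: "norm z < 1"
    by (simp add: hdisk_def)
  define sx where "sx = sqrt (1 - (norm x)\<^sup>2)"
  define sy where "sy = sqrt (1 - (norm y)\<^sup>2)"
  define sz where "sz = sqrt (1 - (norm z)\<^sup>2)"
  have sz: "0 < sz"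
    using one_minus_norm_sq_pos[OF zd] by (simp add: sz_def)
  have "sz * ((1 - t) * sx + t * sy) = (1 - t) * (sx * sz) + t * (sy * sz)"
    by (simp add: algebra_simps)
  also have "\<dots> \<le> (1 - t) * (1 - x \<bullet> z) + t * (1 - y \<bullet> z)"
    unfolding sx_def sy_def sz_def using t sqrt_one_minus_norm_sq_mult_le[OF _ zd] x y
    by (intro add_mono mult_left_mono) auto
  \<comment> \<open>\<open>1 - z \<bullet> z\<close> is the same convex combination of \<open>1 - x \<bullet> z\<close> and \<open>1 - y \<bullet> z\<close>\<close>
  also have "\<dots> = sz * sz"
    using one_minus_norm_sq_pos[OF zd]
    by (simp add: sz_def z_def inner_add_left dot_square_norm[symmetric] algebra_simps)
  finally have "(1 - t) * sx + t * sy \<le> sz"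
    using sz by (simp only: mult_le_cancel_left_pos)
  then show ?thesis
    by (simp add: sx_def sy_def sz_def z_def)
qed

lemma convex_on_height_level:
  assumes "0 \<le> T"
  shows "convex_on hdisk (\<lambda>x. - mink (x, 1) N - T * sqrt (1 - (norm x)\<^sup>2))"
proof (intro convex_onI convex_hdisk)
  fix t :: real and x y
  assume t: "0 < t" "t < 1" and x: "x \<in> hdisk" and y: "y \<in> hdisk"
  have "mink ((1 - t) *\<^sub>R x + t *\<^sub>R y, 1) N = (1 - t) * mink (x, 1) N + t * mink (y, 1) N"
    by (simp add: mink_def inner_add_left algebra_simps)
  moreover have "T * ((1 - t) * sqrt (1 - (norm x)\<^sup>2) + t * sqrt (1 - (norm y)\<^sup>2))
      \<le> T * sqrt (1 - (norm ((1 - t) *\<^sub>R x + t *\<^sub>R y))\<^sup>2)"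
    using x y t assms
    by (intro mult_left_mono sqrt_one_minus_norm_sq_concave) (auto simp: hdisk_def)
  ultimately show "- mink ((1 - t) *\<^sub>R x + t *\<^sub>R y, 1) N
      - T * sqrt (1 - (norm ((1 - t) *\<^sub>R x + t *\<^sub>R y))\<^sup>2)
      \<le> (1 - t) * (- mink (x, 1) N - T * sqrt (1 - (norm x)\<^sup>2))
        + t * (- mink (y, 1) N - T * sqrt (1 - (norm y)\<^sup>2))"
    by (simp only:) (simp add: algebra_simps)
qed

lemma height_nonneg_on_convex_hull:
  assumes V: "V \<subseteq> hdisk" "\<forall>v\<in>V. 0 \<le> height N v" and x: "x \<in> convex hull V"
  shows "0 \<le> height N x"
proof -
  have "convex {x. x \<bullet> fst N \<le> snd N}"
    using convex_halfspace_le[of "fst N" "snd N"] by (simp add: inner_commute)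
  moreover have "V \<subseteq> {x. x \<bullet> fst N \<le> snd N}"
    using V height_nonneg_iff[of _ N] by (force simp: hdisk_def mink_def)
  ultimately have "x \<bullet> fst N \<le> snd N"
    using x hull_minimal[of V _ convex] by blast
  moreover have "norm x < 1"
    using x convex_hull_subset_hdisk[OF V(1)] by (auto simp: hdisk_def)
  ultimately show ?thesis
    using height_nonneg_iff[of x N] by (simp add: mink_def)
qed

lemma convex_on_neg_on_convex_hull:
  fixes F :: "'a::real_vector \<Rightarrow> real"
  assumes F: "convex_on (convex hull V) F" and V: "finite V" and p: "p \<in> V" "F p \<le> 0"
    and neg: "\<forall>v\<in>V - {p}. F v < 0" and x: "x \<in> convex hull V" "x \<noteq> p"
  shows "F x < 0"
proof -
  define W where "W = V - {p}"
  have "W \<noteq> {}"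
  proof
    assume "W = {}"
    then have "V = {p}"
      using p by (auto simp: W_def)
    then show False
      using x by simp
  qed
  have "finite W"
    using V by (simp add: W_def)
  have "convex hull W \<subseteq> convex hull V"
    by (rule hull_mono) (auto simp: W_def)
  define m where "m = Max (F ` W)"
  have "m \<in> F ` W"
    unfolding m_def using \<open>finite W\<close> \<open>W \<noteq> {}\<close> by (intro Max_in) auto
  then have m: "m < 0"
    using neg by (auto simp: W_def)
  have "\<forall>y\<in>convex hull W. F y \<le> m"
    using \<open>finite W\<close> convex_on_subset[OF F \<open>convex hull W \<subseteq> convex hull V\<close> convex_convex_hull]
    by (intro convex_on_convex_hull_bound) (auto simp: m_def)
  moreover have "x \<in> convex hull (insert p W)"
    using x p by (simp add: W_def insert_absorb)
  ultimately obtain s y where sy: "0 \<le> s" "s \<le> 1" "y \<in> convex hull W" "F y \<le> m"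
    "x = (1 - s) *\<^sub>R p + s *\<^sub>R y"
    using convex_hull_insert[OF \<open>W \<noteq> {}\<close>] by (auto simp: eq_diff_eq' add.commute)
  have "s \<noteq> 0"
    using sy(5) x(2) by auto
  have "F x \<le> (1 - s) * F p + s * F y"
    unfolding sy(5) using sy p \<open>convex hull W \<subseteq> convex hull V\<close> hull_inc[of p V]
    by (intro convex_onD[OF F]) auto
  also have "\<dots> \<le> s * m"
    using p sy mult_nonneg_nonpos[of "1 - s" "F p"] mult_left_mono[of "F y" m s] by simp
  also have "\<dots> < 0"
    using m sy \<open>s \<noteq> 0\<close> by (simp add: mult_pos_neg)
  finally show ?thesis .
qed

lemma height_less_on_convex_hull:
  assumes V: "finite V" "V \<subseteq> hdisk" and p: "p \<in> V" "height N p = T" and T: "0 \<le> T"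
    and less: "\<forall>v\<in>V - {p}. height N v < T"
    and x: "x \<in> convex hull V" "x \<noteq> p"
  shows "height N x < T"
proof -
  define F where "F x = - mink (x, 1) N - T * sqrt (1 - (norm x)\<^sup>2)" for x
  have "convex_on (convex hull V) F"
    unfolding F_def using convex_hull_subset_hdisk[OF V(2)]
    by (intro convex_on_subset[OF convex_on_height_level[OF T]] convex_convex_hull)
  moreover have "F p \<le> 0"
    using p V height_eq_iff[of p N T] by (auto simp: F_def hdisk_def)
  moreover have "\<forall>v\<in>V - {p}. F v < 0"
    using less V height_less_iff[of _ N T] by (auto simp: F_def hdisk_def)
  ultimately have "F x < 0"
    by (rule convex_on_neg_on_convex_hull[OF _ V(1) p(1) _ _ x])
  moreover have "norm x < 1"
    using x convex_hull_subset_hdisk[OF V(2)] by (auto simp: hdisk_def)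
  ultimately show ?thesis
    using height_less_iff[of x N T] by (simp add: F_def)
qed

lemma mink_tilted_normal:
  assumes "norm p < 1" "mink N\<^sub>0 N\<^sub>0 = 1" "height N\<^sub>0 p = T"
  shows "mink (N\<^sub>0 - \<mu> *\<^sub>R hpoint p) (N\<^sub>0 - \<mu> *\<^sub>R hpoint p) = 1 + \<mu> * (2 * T - \<mu>)"
proof -
  have "mink (hpoint p) N\<^sub>0 = - T"
    using assms(3) by (simp add: height_def)
  moreover have "mink (N\<^sub>0 - \<mu> *\<^sub>R hpoint p) (N\<^sub>0 - \<mu> *\<^sub>R hpoint p)
      = mink N\<^sub>0 N\<^sub>0 - 2 * \<mu> * mink (hpoint p) N\<^sub>0 + \<mu>\<^sup>2 * mink (hpoint p) (hpoint p)"
    by (simp add: mink_simps mink_commute[of N\<^sub>0 "hpoint p"] power2_eq_square algebra_simps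
        del: mink_Pair)
  ultimately show ?thesis
    using assms(2) by (simp add: mink_hpoint_self[OF assms(1)] power2_eq_square algebra_simps)
qed

lemma exists_height_ratio_min:
  assumes "compact Z" "Z \<noteq> {}" "Z \<subseteq> hdisk" "norm p < 1"
  obtains z\<^sub>0 where "z\<^sub>0 \<in> Z" "\<forall>z\<in>Z. height N z\<^sub>0 / hcosh z\<^sub>0 p \<le> height N z / hcosh z p"
proof -
  have "hcosh z p \<noteq> 0" if "z \<in> Z" for z
    using hcosh_ge_one[of z p] that assms(3,4) by (auto simp: hdisk_def)
  moreover have "continuous_on Z (\<lambda>z. hcosh z p)"
    using continuous_on_height[OF assms(3), of "hpoint p"] by (simp add: height_hpoint)
  ultimately have "continuous_on Z (\<lambda>z. height N z / hcosh z p)"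
    using continuous_on_height[OF assms(3)] by (intro continuous_on_divide) auto
  then show thesis
    using continuous_attains_inf[OF assms(1,2)] that by blast
qed

text \<open>Tilt the line \<open>N\<^sub>0\<close> towards \<open>p\<close> until it touches \<open>Z\<close>.\<close>

lemma exists_tilted_support:
  assumes Z: "convex_body Z" and p: "norm p < 1"
    and N\<^sub>0: "mink N\<^sub>0 N\<^sub>0 = 1" "height N\<^sub>0 p = T"
    and heights: "\<forall>z\<in>Z. 0 \<le> height N\<^sub>0 z \<and> height N\<^sub>0 z < T"
  obtains a b where "supports (hline a b) Z" "\<forall>x\<in>Z. x \<bullet> a \<le> b" "1 \<le> mink (a, b) (a, b)"
    "\<forall>z\<in>Z. height (a, b) z \<le> height N\<^sub>0 z"
proof -
  have Zd: "Z \<subseteq> hdisk" and "compact Z" "Z \<noteq> {}"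
    using Z by (auto simp: convex_body_def)
  have zd: "norm z < 1" if "z \<in> Z" for z
    using that Zd by (auto simp: hdisk_def)
  have cosh_pos: "0 < hcosh z p" if "z \<in> Z" for z
    using hcosh_ge_one[OF zd[OF that] p] by simp
  obtain z\<^sub>0 where z\<^sub>0: "z\<^sub>0 \<in> Z" "\<forall>z\<in>Z. height N\<^sub>0 z\<^sub>0 / hcosh z\<^sub>0 p \<le> height N\<^sub>0 z / hcosh z p"
    using exists_height_ratio_min[OF \<open>compact Z\<close> \<open>Z \<noteq> {}\<close> Zd p] by blast
  define \<mu> where "\<mu> = height N\<^sub>0 z\<^sub>0 / hcosh z\<^sub>0 p"
  have \<mu>: "0 \<le> \<mu>" "\<mu> \<le> T"
  proof -
    show "0 \<le> \<mu>"
      using heights z\<^sub>0(1) cosh_pos[OF z\<^sub>0(1)] by (simp add: \<mu>_def)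
    have "height N\<^sub>0 z\<^sub>0 * 1 \<le> height N\<^sub>0 z\<^sub>0 * hcosh z\<^sub>0 p"
      using heights z\<^sub>0(1) hcosh_ge_one[OF zd[OF z\<^sub>0(1)] p] by (intro mult_left_mono) auto
    then have "\<mu> \<le> height N\<^sub>0 z\<^sub>0"
      using cosh_pos[OF z\<^sub>0(1)] by (simp add: \<mu>_def divide_le_eq)
    then show "\<mu> \<le> T"
      using heights z\<^sub>0(1) by fastforce
  qed
  obtain a b where N: "N\<^sub>0 - \<mu> *\<^sub>R hpoint p = (a, b)"
    by fastforce
  have height_N: "height (a, b) z = height N\<^sub>0 z - \<mu> * hcosh z p" for z
    by (simp flip: N add: height_diff height_scaleR height_hpoint)
  have n: "1 \<le> mink (a, b) (a, b)"
    using mink_tilted_normal[OF p N\<^sub>0, of \<mu>] \<mu> by (simp add: N)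
  have nonneg: "0 \<le> height (a, b) z" if "z \<in> Z" for z
  proof -
    have "\<mu> \<le> height N\<^sub>0 z / hcosh z p"
      using z\<^sub>0(2) that by (simp add: \<mu>_def)
    then show ?thesis
      using cosh_pos[OF that] by (simp add: le_divide_eq height_N)
  qed
  have "height (a, b) z\<^sub>0 = 0"
    using cosh_pos[OF z\<^sub>0(1)] by (simp add: height_N \<mu>_def)
  then have "supports (hline a b) Z"
    using n nonneg z\<^sub>0(1) zd height_nonneg_iff[of _ "(a, b)"] height_eq_0_iff[OF zd[OF z\<^sub>0(1)]]
    by (intro supports_hlineI) (auto simp: mink_self_pos_iff_valid_line[symmetric])
  moreover have "\<forall>z\<in>Z. height (a, b) z \<le> height N\<^sub>0 z"
    using \<mu>(1) cosh_pos by (simp add: height_N less_imp_le)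
  ultimately show thesis
    using that n nonneg zd height_nonneg_iff[of _ "(a, b)"] by auto
qed

lemma exists_support_hwidth_less:
  assumes Z: "convex_body Z" and p: "norm p < 1"
    and N\<^sub>0: "mink N\<^sub>0 N\<^sub>0 = 1" "height N\<^sub>0 p = T"
    and heights: "\<forall>z\<in>Z. 0 \<le> height N\<^sub>0 z \<and> height N\<^sub>0 z < T"
  shows "\<exists>H. supports H Z \<and> hwidth H Z < arcosh (sqrt (1 + T\<^sup>2))"
proof -
  have "compact Z" "Z \<noteq> {}" "Z \<subseteq> hdisk"
    using Z by (auto simp: convex_body_def)
  then obtain z\<^sub>1 where z\<^sub>1: "z\<^sub>1 \<in> Z" "\<forall>z\<in>Z. height N\<^sub>0 z \<le> height N\<^sub>0 z\<^sub>1"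
    by (rule exists_height_max)
  obtain a b where ab: "supports (hline a b) Z" "\<forall>x\<in>Z. x \<bullet> a \<le> b" "1 \<le> mink (a, b) (a, b)"
    "\<forall>z\<in>Z. height (a, b) z \<le> height N\<^sub>0 z"
    using exists_tilted_support[OF Z p N\<^sub>0 heights] by blast
  have "hwidth (hline a b) Z \<le> arcosh (sqrt (1 + (height N\<^sub>0 z\<^sub>1)\<^sup>2))"
    using ab z\<^sub>1 by (intro hwidth_le_arcosh[OF Z]) fastforce+
  also have "\<dots> < arcosh (sqrt (1 + T\<^sup>2))"
    using heights z\<^sub>1(1) by (intro arcosh_real_strict_mono) (auto intro: power_strict_mono)
  finally show ?thesis
    using ab(1) by blast
qed

section \<open>Angles of roots of unity\<close>

lemma cos_add_2pi_int: "cos (y + 2 * pi * of_int n) = cos y"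
  using cos_int_2pin[of n] sin_int_2pin[of n] by (simp add: cos_add mult.commute)

lemma cis_inner_rcis: "cis a \<bullet> rcis R b = R * cos (a - b)"
  by (simp add: rcis_def inner_complex_def cos_diff algebra_simps)

lemma cis_inner_cis: "cis a \<bullet> cis b = cos (a - b)"
  using cis_inner_rcis[of a 1 b] by (simp add: rcis_def)

lemma cos_root_angle_mod:
  assumes "0 < k"
  shows "cos (\<alpha> + 2 * pi * of_int m / real k - \<psi>)
    = cos (\<alpha> + 2 * pi * real (nat (m mod int k)) / real k - \<psi>)"
proof -
  have m: "(of_int m :: real) = real k * of_int (m div int k) + of_int (m mod int k)"
    by (metis of_int_add of_int_mult of_int_of_nat_eq div_mult_mod_eq mult.commute)
  have "\<alpha> + 2 * pi * of_int m / real k - \<psi>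
    = (\<alpha> + 2 * pi * real (nat (m mod int k)) / real k - \<psi>) + 2 * pi * of_int (m div int k)"
    using assms unfolding m by (simp add: field_simps)
  then show ?thesis
    by (simp only: cos_add_2pi_int)
qed

lemma cos_le_cos_abs: "\<bar>t\<bar> \<le> b \<Longrightarrow> b \<le> pi \<Longrightarrow> cos b \<le> cos t"
  using cos_monotone_0_pi_le[of "\<bar>t\<bar>" b] by (cases "0 \<le> t") auto

lemma one_plus_cos_le_cos_add_cos:
  assumes "0 \<le> x" "x \<le> a" "a \<le> pi"
  shows "1 + cos a \<le> cos x + cos (a - x)"
proof -
  define t where "t = x - a / 2"
  have "cos x + cos (a - x) = 2 * cos (a / 2) * cos t"
    using cos_add[of "a / 2" t] cos_diff[of "a / 2" t] by (simp add: t_def)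
  moreover have "1 + cos a = 2 * cos (a / 2) * cos (a / 2)"
    using cos_double_cos[of "a / 2"] by (simp add: power2_eq_square)
  moreover have "\<bar>t\<bar> \<le> a / 2"
    unfolding t_def using assms by arith
  then have "cos (a / 2) \<le> cos t" "0 \<le> cos (a / 2)"
    using assms by (auto intro!: cos_le_cos_abs cos_ge_zero)
  ultimately show ?thesis
    by (simp add: mult_left_mono)
qed

lemma exists_root_angle_near:
  assumes "0 < k"
  obtains l :: int where "- (pi / real k) < \<alpha> + 2 * pi * of_int l / real k - \<psi>"
    "\<alpha> + 2 * pi * of_int l / real k - \<psi> \<le> pi / real k"
proof
  define l where "l = \<lfloor>(\<psi> - \<alpha>) * real k / (2 * pi) + 1 / 2\<rfloor>"
  define e where "e = of_int l - (\<psi> - \<alpha>) * real k / (2 * pi)"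
  have e: "- 1 / 2 < e" "e \<le> 1 / 2"
    unfolding e_def l_def by linarith+
  have "\<alpha> + 2 * pi * of_int l / real k - \<psi> = 2 * pi / real k * e"
    using assms by (simp add: e_def field_simps)
  moreover have "2 * pi / real k * e \<le> 2 * pi / real k * (1 / 2)"
    "2 * pi / real k * (- 1 / 2) < 2 * pi / real k * e"
    using e assms by (intro mult_left_mono mult_strict_left_mono; simp)+
  ultimately show "- (pi / real k) < \<alpha> + 2 * pi * of_int l / real k - \<psi>"
    "\<alpha> + 2 * pi * of_int l / real k - \<psi> \<le> pi / real k"
    by simp_all
qed

text \<open>For odd \<open>k\<close>, the root of unity \<open>(k - 1) div 2\<close> steps further on lies at angle
  \<open>pi - pi / k\<close>, just short of the antipode.\<close>

lemma exists_root_angle_opposite_nonneg: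
  assumes k: "odd k" and \<delta>: "0 \<le> \<delta>" "\<delta> \<le> pi / real k"
  shows "1 + cos (pi / real k) \<le> cos \<delta> - cos (\<delta> + 2 * pi * real ((k - 1) div 2) / real k)"
proof -
  have kp: "0 < real k"
    using k by (simp add: odd_pos)
  have "2 * ((k - 1) div 2) = k - 1" "1 \<le> k"
    using k by (presburger, simp add: odd_pos Suc_leI)
  then have "real (2 * ((k - 1) div 2)) = real (k - 1)"
    by (simp only:)
  then have k2: "2 * real ((k - 1) div 2) = real k - 1"
    using \<open>1 \<le> k\<close> by (simp add: of_nat_diff)
  have "2 * pi * real ((k - 1) div 2) / real k = pi * (2 * real ((k - 1) div 2)) / real k"
    by simp
  also have "\<dots> = pi - pi / real k"
    unfolding k2 using kp by (simp add: field_simps)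
  finally have "2 * pi * real ((k - 1) div 2) / real k = pi - pi / real k" .
  then have "cos (\<delta> + 2 * pi * real ((k - 1) div 2) / real k) = cos ((\<delta> - pi / real k) + pi)"
    by (intro arg_cong[where f = cos]) simp
  also have "\<dots> = - cos (pi / real k - \<delta>)"
    by (metis cos_periodic_pi cos_minus minus_diff_eq)
  finally show ?thesis
    using one_plus_cos_le_cos_add_cos[of \<delta> "pi / real k"] \<delta> kp by (simp add: divide_le_eq)
qed

lemma exists_root_angle_opposite:
  assumes k: "odd k" and \<delta>: "- (pi / real k) < \<delta>" "\<delta> \<le> pi / real k"
  obtains m :: int where "1 + cos (pi / real k) \<le> cos \<delta> - cos (\<delta> + 2 * pi * of_int m / real k)"
proof (cases "0 \<le> \<delta>")
  case True
  then show thesis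
    using that[of "int ((k - 1) div 2)"] exists_root_angle_opposite_nonneg[OF k True \<delta>(2)] by simp
next
  case False
  then have "1 + cos (pi / real k) \<le> cos (- \<delta>) - cos (- \<delta> + 2 * pi * real ((k - 1) div 2) / real k)"
    using \<delta> by (intro exists_root_angle_opposite_nonneg[OF k]) auto
  also have "cos (- \<delta> + 2 * pi * real ((k - 1) div 2) / real k)
      = cos (\<delta> + 2 * pi * of_int (- int ((k - 1) div 2)) / real k)"
    by (subst cos_minus[symmetric]) simp
  finally show thesis
    using that[of "- int ((k - 1) div 2)"] by simp
qed

lemma exists_root_angles_spread:
  assumes k: "odd k"
  shows "\<exists>l\<^sub>1<k. \<exists>l\<^sub>2<k. cos (pi / real k) \<le> cos (\<alpha> + 2 * pi * real l\<^sub>1 / real k - \<psi>) \<and>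
    1 + cos (pi / real k)
      \<le> cos (\<alpha> + 2 * pi * real l\<^sub>1 / real k - \<psi>) - cos (\<alpha> + 2 * pi * real l\<^sub>2 / real k - \<psi>)"
proof -
  have kp: "0 < real k" "0 < k"
    using k by (auto simp: odd_pos)
  obtain l :: int where \<delta>: "- (pi / real k) < \<alpha> + 2 * pi * of_int l / real k - \<psi>"
    "\<alpha> + 2 * pi * of_int l / real k - \<psi> \<le> pi / real k"
    using exists_root_angle_near[OF kp(2)] by blast
  define \<delta> where "\<delta> = \<alpha> + 2 * pi * of_int l / real k - \<psi>"
  obtain m :: int where m: "1 + cos (pi / real k) \<le> cos \<delta> - cos (\<delta> + 2 * pi * of_int m / real k)"
    using exists_root_angle_opposite[OF k] \<delta> unfolding \<delta>_def[symmetric] by blast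
  have cos_int: "cos (\<alpha> + 2 * pi * real (nat (j mod int k)) / real k - \<psi>)
      = cos (\<delta> + 2 * pi * of_int (j - l) / real k)" for j
    using cos_root_angle_mod[OF kp(2), of \<alpha> j \<psi>] kp by (simp add: \<delta>_def field_simps)
  have "cos (pi / real k) \<le> cos \<delta>"
    using \<delta> kp by (intro cos_le_cos_abs) (auto simp: \<delta>_def divide_le_eq)
  moreover have "cos (\<alpha> + 2 * pi * real (nat (l mod int k)) / real k - \<psi>) = cos \<delta>"
    "cos (\<alpha> + 2 * pi * real (nat ((m + l) mod int k)) / real k - \<psi>)
      = cos (\<delta> + 2 * pi * of_int m / real k)"
    using cos_int[of l] cos_int[of "m + l"] by simp_all
  moreover have "nat (j mod int k) < k" for j
    using kp by (simp add: nat_less_iff)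
  ultimately show ?thesis
    using m by metis
qed

lemma neg_cos_root_angle_le:
  assumes k: "odd k" and l: "l < k"
  shows "- cos (2 * pi * real l / real k) \<le> cos (pi / real k)"
proof -
  have kp: "0 < real k"
    using k by (simp add: odd_pos)
  have "2 * l \<noteq> k"
    using k by auto
  then consider "2 * real l + 1 \<le> real k" | "real k + 1 \<le> 2 * real l"
    by linarith
  then show ?thesis
  proof cases
    case 1
    have "pi * (2 * real l + 1) \<le> pi * real k"
      using 1 by simp
    then have "cos (pi - 2 * pi * real l / real k) \<le> cos (pi / real k)"
      using kp by (intro cos_monotone_0_pi_le) (auto simp: field_simps)
    then show ?thesis
      by simp
  next
    case 2
    have "pi * (real k + 1) \<le> pi * (2 * real l)" "pi * (2 * real l) \<le> pi * (2 * real k)"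
      using 2 l by simp_all
    then have "cos (2 * pi * real l / real k - pi) \<le> cos (pi / real k)"
      using kp by (intro cos_monotone_0_pi_le) (auto simp: field_simps)
    then show ?thesis
      by simp
  qed
qed

lemma unit_eq_or_cnj:
  fixes z w :: complex
  assumes "norm z = 1" "norm w = 1" "Re z = Re w"
  shows "z = w \<or> z = cnj w"
proof -
  have "(Im z)\<^sup>2 = (Im w)\<^sup>2"
    using assms cmod_power2[of z] cmod_power2[of w] by simp
  then show ?thesis
    using assms(3) by (auto simp: complex_eq_iff power2_eq_iff)
qed

lemma unit_cycle_step:
  fixes u :: "nat \<Rightarrow> complex"
  assumes k: "1 < k" and unit: "\<And>i. i < k \<Longrightarrow> norm (u i) = 1"
    and eq: "\<And>i. i < k \<Longrightarrow> u i \<bullet> u (Suc i mod k) = u 0 \<bullet> u 1" and i: "i < k"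
  shows "u (Suc i mod k) = u i * (u 1 * cnj (u 0)) \<or> u (Suc i mod k) = u i * cnj (u 1 * cnj (u 0))"
proof -
  define \<omega> where "\<omega> = u 1 * cnj (u 0)"
  define z where "z = u (Suc i mod k) * cnj (u i)"
  have "norm z = 1" "norm \<omega> = 1"
    using unit[OF i] unit[of "Suc i mod k"] unit[of 0] unit[of 1] k
    by (simp_all add: z_def \<omega>_def norm_mult)
  moreover have "Re z = Re \<omega>"
    using eq[OF i] by (simp add: z_def \<omega>_def inner_complex_def mult.commute)
  ultimately have "z = \<omega> \<or> z = cnj \<omega>"
    using unit_eq_or_cnj by blast
  moreover have "cnj (u i) * u i = 1"
    using unit[OF i] complex_norm_square[of "u i"] by (simp add: mult.commute)
  then have "u (Suc i mod k) = z * u i"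
    by (simp add: z_def mult.assoc)
  ultimately show ?thesis
    by (auto simp: mult.commute \<omega>_def)
qed

text \<open>Each step of the cycle is the same rotation or its inverse, so after \<open>i\<close> steps the
  total rotation is an integer multiple \<open>a\<close> of one angle, with \<open>a \<equiv> i (mod 2)\<close>.\<close>

lemma unit_cycle_walk:
  fixes u :: "nat \<Rightarrow> complex"
  assumes k: "1 < k" and unit: "\<And>i. i < k \<Longrightarrow> norm (u i) = 1"
    and eq: "\<And>i. i < k \<Longrightarrow> u i \<bullet> u (Suc i mod k) = u 0 \<bullet> u 1"
  obtains \<theta> where "\<And>i. i \<le> k \<Longrightarrow>
    \<exists>a::int. u (i mod k) = u 0 * cis (of_int a * \<theta>) \<and> \<bar>a\<bar> \<le> int i \<and> even (a + int i)"
proof -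
  define \<omega> where "\<omega> = u 1 * cnj (u 0)"
  define \<theta> where "\<theta> = Arg \<omega>"
  have "norm \<omega> = 1"
    using unit[of 0] unit[of 1] k by (simp add: \<omega>_def norm_mult)
  moreover from this have "\<omega> \<noteq> 0"
    by auto
  ultimately have \<omega>: "\<omega> = cis \<theta>" "cnj \<omega> = cis (- \<theta>)"
    using cis_Arg[of \<omega>] by (auto simp: \<theta>_def sgn_eq simp flip: cis_cnj)
  have step: "u (Suc i mod k) = u i * \<omega> \<or> u (Suc i mod k) = u i * cnj \<omega>" if "i < k" for i
    using unit_cycle_step[OF k unit eq that] by (simp add: \<omega>_def)
  have "\<exists>a::int. u (i mod k) = u 0 * cis (of_int a * \<theta>) \<and> \<bar>a\<bar> \<le> int i \<and> even (a + int i)"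
    if "i \<le> k" for i
    using that
  proof (induction i)
    case 0
    show ?case
      by (intro exI[of _ 0]) simp
  next
    case (Suc i)
    then have "i < k"
      by simp
    then obtain a where a: "u i = u 0 * cis (of_int a * \<theta>)" "\<bar>a\<bar> \<le> int i" "even (a + int i)"
      using Suc by auto
    from step[OF \<open>i < k\<close>] show ?case
    proof (elim disjE)
      assume "u (Suc i mod k) = u i * \<omega>"
      then show ?case
        using a \<omega> by (intro exI[of _ "a + 1"]) (auto simp: cis_mult algebra_simps)
    next
      assume "u (Suc i mod k) = u i * cnj \<omega>"
      then show ?case
        using a \<omega> by (intro exI[of _ "a - 1"]) (auto simp: cis_mult algebra_simps)
    qed
  qed
  then show thesis
    using that by blast
qed

lemma cis_pow_nat_abs_eq_1:
  assumes "cis (of_int a * \<theta>) = 1"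
  shows "cis (of_int b * \<theta>) ^ nat \<bar>a\<bar> = 1"
proof -
  obtain n :: int where n: "of_int a * \<theta> = of_int n * 2 * pi"
    using assms by (auto simp: complex_eq_iff cos_one_2pi_int)
  have "real (nat \<bar>a\<bar>) = of_int (sgn a) * of_int a"
    by (cases "0 \<le> a") (auto simp: sgn_if)
  then have "real (nat \<bar>a\<bar>) * (of_int b * \<theta>) = of_int (sgn a * b) * (of_int a * \<theta>)"
    by (simp add: mult_ac)
  also have "\<dots> = 2 * pi * of_int (sgn a * b * n)"
    unfolding n by simp
  finally show ?thesis
    by (simp only: Complex.DeMoivre cis_multiple_2pi Ints_of_int)
qed

lemma inj_on_roots_of_unity_image:
  fixes \<zeta> :: "nat \<Rightarrow> complex"
  assumes inj: "inj_on \<zeta> {..<k}" and root: "\<And>i. i < k \<Longrightarrow> \<zeta> i ^ S = 1" and S: "0 < S" "S \<le> k"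
  shows "\<zeta> ` {..<k} = {z. z ^ k = 1}"
proof -
  have fin: "finite {z::complex. z ^ n = 1}" if "0 < n" for n
    using that by (intro finite_roots_unity) simp_all
  have card: "card (\<zeta> ` {..<k}) = k"
    using card_image[OF inj] by simp
  have sub: "\<zeta> ` {..<k} \<subseteq> {z. z ^ S = 1}"
    using root by auto
  have "k \<le> S"
    using card_mono[OF fin[OF S(1)] sub] card card_roots_unity_eq[OF S(1)] by simp
  then have "S = k"
    using S(2) by simp
  then show ?thesis
    using sub card card_roots_unity_eq[of k] S(1) by (intro card_subset_eq[OF fin]) auto
qed

lemma unit_cycle_eq_roots_of_unity:
  fixes u :: "nat \<Rightarrow> complex"
  assumes k: "odd k" "1 < k" and unit: "\<And>i. i < k \<Longrightarrow> norm (u i) = 1"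
    and inj: "inj_on u {..<k}" and eq: "\<And>i. i < k \<Longrightarrow> u i \<bullet> u (Suc i mod k) = u 0 \<bullet> u 1"
  shows "u ` {..<k} = (\<lambda>l. u 0 * cis (2 * pi * real l / real k)) ` {..<k}"
proof -
  obtain \<theta> where walk: "\<And>i. i \<le> k \<Longrightarrow>
    \<exists>a::int. u (i mod k) = u 0 * cis (of_int a * \<theta>) \<and> \<bar>a\<bar> \<le> int i \<and> even (a + int i)"
    using unit_cycle_walk[OF k(2) unit eq] by blast
  have u0: "u 0 \<noteq> 0"
    using unit[of 0] k by auto
  \<comment> \<open>The walk closes up after \<open>k\<close> steps with an odd, hence nonzero, total rotation \<open>a\<close>.\<close>
  obtain a where a: "cis (of_int a * \<theta>) = 1" "\<bar>a\<bar> \<le> int k" "odd a"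
    using walk[of k] k u0 by auto
  define S where "S = nat \<bar>a\<bar>"
  have S: "0 < S" "S \<le> k"
    using a by (auto simp: S_def)
  define \<zeta> where "\<zeta> i = u i / u 0" for i
  have "\<zeta> i ^ S = 1" if i: "i < k" for i
  proof -
    obtain b :: int where "u i = u 0 * cis (of_int b * \<theta>)"
      using walk[of i] i by auto
    then show ?thesis
      using u0 cis_pow_nat_abs_eq_1[OF a(1)] by (simp add: \<zeta>_def S_def)
  qed
  moreover have "inj_on \<zeta> {..<k}"
    using inj u0 by (auto simp: inj_on_def \<zeta>_def)
  ultimately have "\<zeta> ` {..<k} = {z. z ^ k = 1}"
    using S by (intro inj_on_roots_of_unity_image)
  also have "\<dots> = (\<lambda>l. cis (2 * pi * real l / real k)) ` {..<k}"
    using Complex.bij_betw_roots_unity[of k] k by (simp add: bij_betw_def)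
  finally have \<zeta>_image: "\<zeta> ` {..<k} = (\<lambda>l. cis (2 * pi * real l / real k)) ` {..<k}" .
  have "u ` {..<k} = (\<lambda>z. u 0 * z) ` \<zeta> ` {..<k}"
    using u0 by (auto simp: image_image \<zeta>_def)
  also have "\<dots> = (\<lambda>l. u 0 * cis (2 * pi * real l / real k)) ` {..<k}"
    unfolding \<zeta>_image by (simp add: image_image)
  finally show ?thesis .
qed

section \<open>Regular odd-gons\<close>

text \<open>The Lorentz boost of velocity \<open>c\<close>, which maps the lift \<open>(0, 1)\<close> of the origin to
  \<open>hpoint c\<close>; here \<open>g\<close> is the Lorentz factor and \<open>\<kappa> = g\<^sup>2 / (1 + g)\<close>.\<close>

definition boost :: "complex \<Rightarrow> complex \<times> real \<Rightarrow> complex \<times> real" where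
  "boost c X = (let g = 1 / sqrt (1 - (norm c)\<^sup>2); \<kappa> = g\<^sup>2 / (1 + g) in
    (fst X + (\<kappa> * (fst X \<bullet> c) + snd X * g) *\<^sub>R c, g * (fst X \<bullet> c) + snd X * g))"

lemma boost_eq:
  assumes "norm c < 1"
  obtains g \<kappa> where "g\<^sup>2 * (1 - c \<bullet> c) = 1" "\<kappa> * (1 + g) = g\<^sup>2"
    "\<And>X. boost c X = (fst X + (\<kappa> * (fst X \<bullet> c) + snd X * g) *\<^sub>R c, g * (fst X \<bullet> c) + snd X * g)"
    "\<And>X. boost (- c) X = (fst X + (\<kappa> * (fst X \<bullet> c) - snd X * g) *\<^sub>R c, snd X * g - g * (fst X \<bullet> c))"
proof
  define g where "g = 1 / sqrt (1 - (norm c)\<^sup>2)"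
  have "0 < 1 - (norm c)\<^sup>2"
    using one_minus_norm_sq_pos[OF assms(1)] .
  then show "g\<^sup>2 * (1 - c \<bullet> c) = 1"
    by (simp add: g_def power_divide dot_square_norm)
  have "0 < g"
    using \<open>0 < 1 - (norm c)\<^sup>2\<close> by (simp add: g_def)
  then show "g\<^sup>2 / (1 + g) * (1 + g) = g\<^sup>2"
    by simp
  show "boost c X = (fst X + (g\<^sup>2 / (1 + g) * (fst X \<bullet> c) + snd X * g) *\<^sub>R c,
      g * (fst X \<bullet> c) + snd X * g)" for X
    by (simp add: boost_def g_def Let_def)
  show "boost (- c) X = (fst X + (g\<^sup>2 / (1 + g) * (fst X \<bullet> c) - snd X * g) *\<^sub>R c,
      snd X * g - g * (fst X \<bullet> c))" for X
    by (simp add: boost_def g_def Let_def algebra_simps)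
qed

lemma mink_boost:
  assumes "norm c < 1"
  shows "mink (boost c X) (boost c Y) = mink X Y"
proof -
  obtain g \<kappa> where h: "g\<^sup>2 * (1 - c \<bullet> c) = 1" "\<kappa> * (1 + g) = g\<^sup>2"
    and boost: "\<And>X. boost c X
      = (fst X + (\<kappa> * (fst X \<bullet> c) + snd X * g) *\<^sub>R c, g * (fst X \<bullet> c) + snd X * g)"
    using boost_eq[OF assms] by metis
  obtain x t y s where XY: "X = (x, t)" "Y = (y, s)"
    by fastforce
  define A B where "A = \<kappa> * (x \<bullet> c) + t * g" "B = \<kappa> * (y \<bullet> c) + s * g"
  have "fst (boost c X) \<bullet> fst (boost c Y) = x \<bullet> y + B * (x \<bullet> c) + A * (y \<bullet> c) + A * B * (c \<bullet> c)"
    by (simp add: XY boost A_B_def inner_add_left inner_add_right inner_commute[of c y]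
        algebra_simps)
  moreover have "snd (boost c X) * snd (boost c Y) = (g * (x \<bullet> c) + t * g) * (g * (y \<bullet> c) + s * g)"
    by (simp add: XY boost)
  moreover have "x \<bullet> y + B * (x \<bullet> c) + A * (y \<bullet> c) + A * B * (c \<bullet> c)
      - (g * (x \<bullet> c) + t * g) * (g * (y \<bullet> c) + s * g) = x \<bullet> y - t * s"
    unfolding A_B_def using h by algebra
  ultimately show ?thesis
    by (simp add: mink_def XY)
qed

lemma boost_uminus_inverse:
  assumes "norm c < 1"
  shows "boost c (boost (- c) X) = X"
proof -
  obtain g \<kappa> where h: "g\<^sup>2 * (1 - c \<bullet> c) = 1" "\<kappa> * (1 + g) = g\<^sup>2"
    and boost: "\<And>X. boost c X
      = (fst X + (\<kappa> * (fst X \<bullet> c) + snd X * g) *\<^sub>R c, g * (fst X \<bullet> c) + snd X * g)"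
    and boost': "\<And>X. boost (- c) X
      = (fst X + (\<kappa> * (fst X \<bullet> c) - snd X * g) *\<^sub>R c, snd X * g - g * (fst X \<bullet> c))"
    using boost_eq[OF assms] by metis
  obtain x t where X: "X = (x, t)"
    by fastforce
  define a where "a = \<kappa> * (x \<bullet> c) - t * g"
  have "a + (\<kappa> * ((x + a *\<^sub>R c) \<bullet> c) + (t * g - g * (x \<bullet> c)) * g) = 0"
    "g * ((x + a *\<^sub>R c) \<bullet> c) + (t * g - g * (x \<bullet> c)) * g = t"
    unfolding a_def inner_add_left inner_scaleR_left using h by algebra+
  then show ?thesis
    by (simp add: X boost boost' a_def[symmetric] scaleR_add_left[symmetric] add.assoc)
qed

lemma boost_origin: "boost c (0, 1) = hpoint c"
  by (simp add: boost_def hpoint_def Let_def)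

locale odd_regular_polygon =
  fixes k :: nat and c :: complex and r :: real and v :: "nat \<Rightarrow> complex"
  assumes odd_k: "odd k" and three_le_k: "3 \<le> k" and centre: "norm c < 1" and radius_pos: "0 < r"
    and vertex: "\<And>i. i < k \<Longrightarrow> norm (v i) < 1" and radius: "\<And>i. i < k \<Longrightarrow> hdist c (v i) = r"
    and inj_v: "inj_on v {..<k}"
    and sides: "\<And>i. i < k \<Longrightarrow> hdist (v i) (v (Suc i mod k)) = hdist (v 0) (v 1)"
begin

definition u :: "nat \<Rightarrow> complex" where
  "u i = fst (boost (- c) (hpoint (v i))) /\<^sub>R sinh r"

lemma mink_boost_hpoint: "mink (boost (- c) (hpoint x)) X = mink (hpoint x) (boost c X)"
  using mink_boost[of "- c" "hpoint x" "boost c X"] boost_uminus_inverse[of "- c" X] centre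
  by simp

lemma boost_vertex: "i < k \<Longrightarrow> boost (- c) (hpoint (v i)) = (sinh r *\<^sub>R u i, cosh r)"
proof -
  assume i: "i < k"
  have "- snd (boost (- c) (hpoint (v i))) = mink (boost (- c) (hpoint (v i))) (0, 1)"
    by (simp add: mink_def)
  also have "\<dots> = - hcosh (v i) c"
    by (simp add: mink_boost_hpoint boost_origin hcosh_def)
  also have "hcosh (v i) c = cosh r"
    using cosh_hdist[OF centre vertex[OF i]] radius[OF i] by (simp add: hcosh_commute)
  finally show ?thesis
    using radius_pos by (simp add: u_def prod_eq_iff)
qed

lemma height_boost_vertex:
  assumes "i < k"
  shows "height (boost c X) (v i) = cosh r * snd X - sinh r * (u i \<bullet> fst X)"
  unfolding height_def mink_boost_hpoint[symmetric] boost_vertex[OF assms]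
  by (simp add: mink_def)

lemma hcosh_vertices:
  assumes "i < k" "j < k"
  shows "hcosh (v i) (v j) = (cosh r)\<^sup>2 - (sinh r)\<^sup>2 * (u i \<bullet> u j)"
proof -
  have "hcosh (v i) (v j) = - mink (boost (- c) (hpoint (v i))) (boost (- c) (hpoint (v j)))"
    using centre by (simp add: hcosh_def mink_boost)
  then show ?thesis
    using assms by (simp add: boost_vertex power2_eq_square)
qed

lemma norm_u: "i < k \<Longrightarrow> norm (u i) = 1"
proof -
  assume i: "i < k"
  have "1 = (cosh r)\<^sup>2 - (sinh r)\<^sup>2 * (norm (u i))\<^sup>2"
    using hcosh_vertices[OF i i] hcosh_self[OF vertex[OF i]] by (simp add: dot_square_norm)
  then have "(sinh r)\<^sup>2 * (norm (u i))\<^sup>2 = (sinh r)\<^sup>2"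
    by (simp add: cosh_square_eq)
  then have "(norm (u i))\<^sup>2 = 1"
    using radius_pos by simp
  then show ?thesis
    by (simp add: abs_square_eq_1)
qed

lemma inner_u_Suc: "i < k \<Longrightarrow> u i \<bullet> u (Suc i mod k) = u 0 \<bullet> u 1"
proof -
  assume i: "i < k"
  have k: "0 < k" "1 < k" "Suc i mod k < k"
    using three_le_k by auto
  have "hcosh (v i) (v (Suc i mod k)) = hcosh (v 0) (v 1)"
    using sides[OF i] cosh_hdist[OF vertex[OF i] vertex[OF k(3)]] cosh_hdist[OF vertex[OF k(1)]
        vertex[OF k(2)]] by simp
  then show ?thesis
    using i k radius_pos by (simp add: hcosh_vertices)
qed

lemma inj_u: "inj_on u {..<k}"
proof (rule inj_onI)
  fix i j
  assume ij: "i \<in> {..<k}" "j \<in> {..<k}" "u i = u j"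
  then have "boost c (boost (- c) (hpoint (v i))) = boost c (boost (- c) (hpoint (v j)))"
    by (simp add: boost_vertex)
  then have "hpoint (v i) = hpoint (v j)"
    using centre by (simp add: boost_uminus_inverse)
  then show "i = j"
    using ij hpoint_inject vertex inj_v by (metis inj_onD lessThan_iff)
qed

lemma image_u: "u ` {..<k} = (\<lambda>l. u 0 * cis (2 * pi * real l / real k)) ` {..<k}"
  using three_le_k by (intro unit_cycle_eq_roots_of_unity odd_k norm_u inj_u inner_u_Suc) auto

definition \<alpha> :: real where
  "\<alpha> = Arg (u 0)"

lemma u_0: "u 0 = cis \<alpha>"
proof -
  have "norm (u 0) = 1"
    using norm_u three_le_k by simp
  moreover from this have "u 0 \<noteq> 0"
    by auto
  ultimately show ?thesis
    using cis_Arg[of "u 0"] by (simp add: \<alpha>_def sgn_eq)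
qed

lemma u_eq_cis: "i < k \<Longrightarrow> \<exists>l<k. u i = cis (\<alpha> + 2 * pi * real l / real k)"
  using image_u by (auto simp: u_0 cis_mult)

lemma cis_eq_u:
  assumes "l < k"
  shows "\<exists>i<k. u i = cis (\<alpha> + 2 * pi * real l / real k)"
proof -
  have "u 0 * cis (2 * pi * real l / real k) \<in> u ` {..<k}"
    unfolding image_u using assms by blast
  then show ?thesis
    by (auto simp: u_0 cis_mult)
qed

lemma neg_cos_le_inner_u:
  assumes "i < k" "j < k"
  shows "- cos (pi / real k) \<le> u i \<bullet> u j"
proof -
  obtain li lj where "li < k" "lj < k" "u i = cis (\<alpha> + 2 * pi * real li / real k)"
    "u j = cis (\<alpha> + 2 * pi * real lj / real k)"
    using u_eq_cis assms by metis
  then have "u i \<bullet> u j = cos (0 + 2 * pi * of_int (int li - int lj) / real k - 0)"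
    by (simp add: cis_inner_cis diff_divide_distrib algebra_simps)
  also have "\<dots> = cos (0 + 2 * pi * real (nat ((int li - int lj) mod int k)) / real k - 0)"
    by (rule cos_root_angle_mod) (use three_le_k in simp)
  finally show ?thesis
    using neg_cos_root_angle_le[OF odd_k, of "nat ((int li - int lj) mod int k)"] three_le_k
    by (simp add: nat_less_iff)
qed

lemma exists_vertices_spread:
  "\<exists>i\<^sub>1<k. \<exists>i\<^sub>2<k. norm n * cos (pi / real k) \<le> u i\<^sub>1 \<bullet> n \<and>
    norm n * (1 + cos (pi / real k)) \<le> u i\<^sub>1 \<bullet> n - u i\<^sub>2 \<bullet> n"
proof -
  obtain l\<^sub>1 l\<^sub>2 where l: "l\<^sub>1 < k" "l\<^sub>2 < k"
    "cos (pi / real k) \<le> cos (\<alpha> + 2 * pi * real l\<^sub>1 / real k - Arg n)"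
    "1 + cos (pi / real k) \<le> cos (\<alpha> + 2 * pi * real l\<^sub>1 / real k - Arg n)
      - cos (\<alpha> + 2 * pi * real l\<^sub>2 / real k - Arg n)"
    using exists_root_angles_spread[OF odd_k] by blast
  obtain i\<^sub>1 i\<^sub>2 where i: "i\<^sub>1 < k" "i\<^sub>2 < k" "u i\<^sub>1 = cis (\<alpha> + 2 * pi * real l\<^sub>1 / real k)"
    "u i\<^sub>2 = cis (\<alpha> + 2 * pi * real l\<^sub>2 / real k)"
    using cis_eq_u l(1,2) by metis
  have "u i \<bullet> n = norm n * cos (\<alpha> + 2 * pi * real l / real k - Arg n)"
    if "u i = cis (\<alpha> + 2 * pi * real l / real k)" for i l
    using that cis_inner_rcis[of _ "norm n" "Arg n"] by (simp add: rcis_cmod_Arg)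
  then have "u i\<^sub>1 \<bullet> n = norm n * cos (\<alpha> + 2 * pi * real l\<^sub>1 / real k - Arg n)"
    "u i\<^sub>2 \<bullet> n = norm n * cos (\<alpha> + 2 * pi * real l\<^sub>2 / real k - Arg n)"
    using i(3,4) by blast+
  moreover have "norm n * cos (pi / real k) \<le> norm n * cos (\<alpha> + 2 * pi * real l\<^sub>1 / real k - Arg n)"
    "norm n * (1 + cos (pi / real k)) \<le> norm n * (cos (\<alpha> + 2 * pi * real l\<^sub>1 / real k - Arg n)
      - cos (\<alpha> + 2 * pi * real l\<^sub>2 / real k - Arg n))"
    using l by (simp_all add: mult_left_mono)
  ultimately have "norm n * cos (pi / real k) \<le> u i\<^sub>1 \<bullet> n"
    "norm n * (1 + cos (pi / real k)) \<le> u i\<^sub>1 \<bullet> n - u i\<^sub>2 \<bullet> n"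
    by (simp_all add: right_diff_distrib)
  with i(1,2) show ?thesis
    by blast
qed

text \<open>\<open>T = sinh \<Delta>\<close> for the thickness \<open>\<Delta>\<close> of the polygon: the height of a vertex over
  the line through the opposite side.\<close>

definition T :: real where
  "T = sinh r * cosh r * (1 + cos (pi / real k))
    / sqrt ((cosh r)\<^sup>2 - (sinh r)\<^sup>2 * (cos (pi / real k))\<^sup>2)"

lemma cos_pi_div_k_bounds: "0 < cos (pi / real k)" "cos (pi / real k) \<le> 1"
proof -
  have "pi * 2 < pi * real k"
    using three_le_k by (intro mult_strict_left_mono) auto
  then have "pi / real k < pi / 2" "0 < pi / real k"
    using three_le_k by (simp_all add: field_simps)
  then show "0 < cos (pi / real k)"
    by (intro cos_gt_zero_pi) auto
qed simp

lemma one_le_T_denominator: "1 \<le> (cosh r)\<^sup>2 - (sinh r)\<^sup>2 * (cos (pi / real k))\<^sup>2"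
proof -
  have "(sinh r)\<^sup>2 * (cos (pi / real k))\<^sup>2 \<le> (sinh r)\<^sup>2"
    using cos_pi_div_k_bounds by (simp add: mult_left_le power_le_one)
  then show ?thesis
    by (simp add: cosh_square_eq)
qed

lemma T_pos: "0 < T"
  using radius_pos cos_pi_div_k_bounds one_le_T_denominator by (simp add: T_def add_pos_pos)

lemma T_mult_sqrt_le:
  assumes "cosh r * \<beta> = sinh r * M" "R * cos (pi / real k) \<le> M" "0 \<le> R" "\<beta>\<^sup>2 \<le> R\<^sup>2"
  shows "T * sqrt (R\<^sup>2 - \<beta>\<^sup>2) \<le> sinh r * R * (1 + cos (pi / real k))"
proof -
  define c\<^sub>0 where "c\<^sub>0 = cos (pi / real k)"
  define D where "D = (cosh r)\<^sup>2 - (sinh r)\<^sup>2 * c\<^sub>0\<^sup>2"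
  have D: "1 \<le> D" and c\<^sub>0: "0 < c\<^sub>0"
    using one_le_T_denominator cos_pi_div_k_bounds by (simp_all add: D_def c\<^sub>0_def)
  have "(R * c\<^sub>0)\<^sup>2 \<le> M\<^sup>2"
    using assms c\<^sub>0 by (intro power_mono) (auto simp: c\<^sub>0_def)
  then have M: "(sinh r)\<^sup>2 * (R\<^sup>2 * c\<^sub>0\<^sup>2) \<le> (sinh r)\<^sup>2 * M\<^sup>2"
    by (simp add: power_mult_distrib mult_left_mono)
  have "(cosh r)\<^sup>2 * \<beta>\<^sup>2 = (sinh r)\<^sup>2 * M\<^sup>2"
    using assms(1) by (metis power_mult_distrib)
  then have "(cosh r)\<^sup>2 * (R\<^sup>2 - \<beta>\<^sup>2) = (cosh r)\<^sup>2 * R\<^sup>2 - (sinh r)\<^sup>2 * M\<^sup>2"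
    by (simp add: right_diff_distrib)
  also have "\<dots> \<le> R\<^sup>2 * D"
    using M by (simp add: D_def algebra_simps)
  finally have key: "(cosh r)\<^sup>2 * (R\<^sup>2 - \<beta>\<^sup>2) \<le> R\<^sup>2 * D" .
  have "T = sinh r * cosh r * (1 + c\<^sub>0) / sqrt D"
    by (simp add: T_def c\<^sub>0_def D_def)
  then have "(T * sqrt (R\<^sup>2 - \<beta>\<^sup>2))\<^sup>2 = (sinh r * (1 + c\<^sub>0))\<^sup>2 / D * ((cosh r)\<^sup>2 * (R\<^sup>2 - \<beta>\<^sup>2))"
    using assms(4) D by (simp add: power_mult_distrib power_divide mult_ac)
  also have "\<dots> \<le> (sinh r * (1 + c\<^sub>0))\<^sup>2 / D * (R\<^sup>2 * D)"
    using key D by (intro mult_left_mono) auto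
  also have "\<dots> = (sinh r * R * (1 + c\<^sub>0))\<^sup>2"
    using D by (simp add: power_mult_distrib)
  finally have "(T * sqrt (R\<^sup>2 - \<beta>\<^sup>2))\<^sup>2 \<le> (sinh r * R * (1 + c\<^sub>0))\<^sup>2" .
  then have "T * sqrt (R\<^sup>2 - \<beta>\<^sup>2) \<le> sinh r * R * (1 + c\<^sub>0)"
    by (rule power2_le_imp_le) (use assms(3) radius_pos c\<^sub>0 in auto)
  then show ?thesis
    by (simp add: c\<^sub>0_def)
qed

lemma exists_vertex_height_ge:
  assumes N: "0 < mink N N" and nonneg: "\<forall>i<k. 0 \<le> height N (v i)"
    and i\<^sub>0: "i\<^sub>0 < k" "height N (v i\<^sub>0) = 0"
  shows "\<exists>i<k. T * sqrt (mink N N) \<le> height N (v i)"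
proof -
  obtain n \<beta> where n\<beta>: "boost (- c) N = (n, \<beta>)"
    by fastforce
  then have N_eq: "N = boost c (n, \<beta>)"
    using boost_uminus_inverse[of c N] centre by simp
  have h: "height N (v i) = cosh r * \<beta> - sinh r * (u i \<bullet> n)" if "i < k" for i
    using height_boost_vertex[OF that] by (simp add: N_eq)
  have nn: "mink N N = (norm n)\<^sup>2 - \<beta>\<^sup>2"
    using mink_boost[OF centre] by (simp add: N_eq dot_square_norm power2_eq_square)
  define M where "M = u i\<^sub>0 \<bullet> n"
  have \<beta>: "cosh r * \<beta> = sinh r * M"
    using h[OF i\<^sub>0(1)] i\<^sub>0(2) by (simp add: M_def)
  have M: "u i \<bullet> n \<le> M" if "i < k" for i
  proof -
    have "sinh r * (u i \<bullet> n) \<le> sinh r * M"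
      using nonneg[rule_format, OF that] h[OF that] \<beta> by simp
    then show ?thesis
      using radius_pos by simp
  qed
  obtain i\<^sub>1 i\<^sub>2 where i: "i\<^sub>1 < k" "i\<^sub>2 < k" "norm n * cos (pi / real k) \<le> u i\<^sub>1 \<bullet> n"
    "norm n * (1 + cos (pi / real k)) \<le> u i\<^sub>1 \<bullet> n - u i\<^sub>2 \<bullet> n"
    using exists_vertices_spread by blast
  have "sinh r * (norm n * (1 + cos (pi / real k))) \<le> sinh r * (M - u i\<^sub>2 \<bullet> n)"
    using i(4) M[OF i(1)] radius_pos by (intro mult_left_mono) auto
  also have "\<dots> = height N (v i\<^sub>2)"
    using h[OF i(2)] \<beta> by (simp add: algebra_simps)
  finally have "sinh r * norm n * (1 + cos (pi / real k)) \<le> height N (v i\<^sub>2)"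
    by (simp add: mult.assoc)
  moreover have "T * sqrt (mink N N) \<le> sinh r * norm n * (1 + cos (pi / real k))"
    unfolding nn by (rule T_mult_sqrt_le[OF \<beta>]) (use i(3) M[OF i(1)] N nn in auto)
  ultimately show ?thesis
    using i(2) by force
qed

lemma inner_u_less_one: "i < k \<Longrightarrow> j < k \<Longrightarrow> i \<noteq> j \<Longrightarrow> u i \<bullet> u j < 1"
proof -
  assume ij: "i < k" "j < k" "i \<noteq> j"
  then have "0 < (norm (u i - u j))\<^sup>2"
    using inj_u by (auto simp: inj_on_def)
  also have "(norm (u i - u j))\<^sup>2 = u i \<bullet> u i + u j \<bullet> u j - 2 * (u i \<bullet> u j)"
    by (simp add: power2_norm_eq_inner inner_diff_left inner_diff_right
        inner_commute[of "u j" "u i"])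
  also have "\<dots> = 2 - 2 * (u i \<bullet> u j)"
    using norm_u[OF ij(1)] norm_u[OF ij(2)] by (simp add: dot_square_norm)
  finally show ?thesis
    by simp
qed

lemma opposite_side_normal:
  assumes j: "j < k"
  obtains N where "mink N N = 1" "height N (v j) = T" "\<forall>i<k. 0 \<le> height N (v i)"
    "\<forall>i<k. i \<noteq> j \<longrightarrow> height N (v i) < T"
proof
  define c\<^sub>0 where "c\<^sub>0 = cos (pi / real k)"
  define D where "D = (cosh r)\<^sup>2 - (sinh r)\<^sup>2 * c\<^sub>0\<^sup>2"
  have D: "1 \<le> D"
    using one_le_T_denominator by (simp add: D_def c\<^sub>0_def)
  define R where "R = cosh r / sqrt D"
  define \<beta> where "\<beta> = sinh r * c\<^sub>0 / sqrt D"
  \<comment> \<open>centred at the origin, the side opposite to \<open>v j\<close> has unit normal \<open>(- R *\<^sub>R u j, \<beta>)\<close>\<close>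
  define N where "N = boost c (- R *\<^sub>R u j, \<beta>)"
  have R: "0 < R"
    using D by (simp add: R_def)
  have h: "height N (v i) = sinh r * R * (c\<^sub>0 + u i \<bullet> u j)" if "i < k" for i
    unfolding N_def height_boost_vertex[OF that] by (simp add: \<beta>_def R_def algebra_simps)
  have T: "T = sinh r * R * (c\<^sub>0 + 1)"
    by (simp add: T_def R_def c\<^sub>0_def D_def add.commute)
  have "mink N N = R\<^sup>2 - \<beta>\<^sup>2"
    using mink_boost[OF centre] norm_u[OF j] by (simp add: N_def dot_square_norm power2_eq_square)
  also have "\<dots> = ((cosh r)\<^sup>2 - (sinh r)\<^sup>2 * c\<^sub>0\<^sup>2) / D"
    using D by (simp add: R_def \<beta>_def power_divide power_mult_distrib diff_divide_distrib)
  finally show "mink N N = 1"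
    using D by (simp add: D_def)
  show "height N (v j) = T"
    using h[OF j] norm_u[OF j] by (simp add: dot_square_norm T)
  show "\<forall>i<k. 0 \<le> height N (v i)"
  proof (intro allI impI)
    fix i
    assume "i < k"
    then have "0 \<le> c\<^sub>0 + u i \<bullet> u j"
      using neg_cos_le_inner_u[OF \<open>i < k\<close> j] by (simp add: c\<^sub>0_def)
    then show "0 \<le> height N (v i)"
      using h[OF \<open>i < k\<close>] radius_pos R by simp
  qed
  show "\<forall>i<k. i \<noteq> j \<longrightarrow> height N (v i) < T"
  proof (intro allI impI)
    fix i
    assume i: "i < k" "i \<noteq> j"
    have "0 < sinh r * R"
      using radius_pos R by simp
    then have "sinh r * R * (c\<^sub>0 + u i \<bullet> u j) < sinh r * R * (c\<^sub>0 + 1)"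
      using inner_u_less_one[OF i(1) j i(2)] by (intro mult_strict_left_mono) auto
    then show "height N (v i) < T"
      unfolding h[OF i(1)] T .
  qed
qed


definition polygon :: "complex set" where
  "polygon = convex hull (v ` {..<k})"

lemma vertices_subset_hdisk: "v ` {..<k} \<subseteq> hdisk"
  using vertex by (auto simp: hdisk_def)

lemma vertex_in_polygon: "i < k \<Longrightarrow> v i \<in> polygon"
  by (simp add: polygon_def hull_inc)

lemma polygon_subset_hdisk: "polygon \<subseteq> hdisk"
  unfolding polygon_def by (rule convex_hull_subset_hdisk[OF vertices_subset_hdisk])

lemma convex_body_polygon: "convex_body polygon"
  unfolding convex_body_def
proof (intro conjI)
  show "polygon \<subseteq> hdisk"
    by (rule polygon_subset_hdisk)
  show "compact polygon" "convex polygon"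
    by (simp_all add: polygon_def finite_imp_compact_convex_hull)
  show "interior polygon \<noteq> {}"
  proof
    assume "interior polygon = {}"
    then obtain a b where ab: "a \<noteq> 0" "polygon \<subseteq> {x. a \<bullet> x = b}"
      using empty_interior_subset_hyperplane[of polygon] by (auto simp: polygon_def)
    have on_line: "height (a, b) (v i) = 0" if "i < k" for i
      using ab(2) vertex_in_polygon[OF that] height_eq_0_iff[OF vertex[OF that]]
      by (auto simp: inner_commute)
    have k: "0 < k"
      using three_le_k by simp
    have "\<bar>b\<bar> \<le> norm a * norm (v 0)"
      using ab(2) vertex_in_polygon[OF k] Cauchy_Schwarz_ineq2[of a "v 0"] by auto
    also have "\<dots> < norm a"
      using ab(1) vertex[OF k] by simp
    finally have "valid_line a b"
      using ab(1) by (simp add: valid_line_def)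
    then have "0 < mink (a, b) (a, b)"
      by (rule mink_self_pos_iff_valid_line[THEN iffD2])
    then obtain i where "i < k" "T * sqrt (mink (a, b) (a, b)) \<le> height (a, b) (v i)"
      using exists_vertex_height_ge[of "(a, b)" 0] on_line k by auto
    moreover have "0 < T * sqrt (mink (a, b) (a, b))"
      using T_pos \<open>0 < mink (a, b) (a, b)\<close> by simp
    ultimately show False
      using on_line by simp
  qed
qed

lemma arcosh_le_thickness_polygon: "arcosh (sqrt (1 + T\<^sup>2)) \<le> thickness polygon"
proof (rule le_thickness[OF convex_body_polygon])
  fix H
  assume "supports H polygon"
  then obtain a b p where ab: "valid_line a b" "H = hline a b" "\<forall>x\<in>polygon. x \<bullet> a \<le> b"
    and p: "p \<in> polygon" "p \<in> H"
    by (elim supportsE)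
  have nonneg: "\<forall>i<k. 0 \<le> height (a, b) (v i)"
    using ab(3) vertex_in_polygon height_nonneg_iff[OF vertex] by simp
  obtain i\<^sub>0 where i\<^sub>0: "i\<^sub>0 < k" "v i\<^sub>0 \<bullet> a = b"
  proof (rule ccontr)
    assume "\<not> thesis"
    then have "\<forall>x\<in>v ` {..<k}. x \<bullet> a < b"
      using ab(3) vertex_in_polygon that by force
    then have "polygon \<subseteq> {x. x \<bullet> a < b}"
      unfolding polygon_def
      using convex_halfspace_lt[of a b] by (intro hull_minimal) (auto simp: inner_commute)
    then show False
      using p ab(2) by (auto simp: hline_def)
  qed
  then have "height (a, b) (v i\<^sub>0) = 0"
    using height_eq_0_iff[OF vertex[OF i\<^sub>0(1)]] by simp
  moreover have "0 < mink (a, b) (a, b)"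
    using ab(1) by (rule mink_self_pos_iff_valid_line[THEN iffD2])
  ultimately obtain i where "i < k" "T * sqrt (mink (a, b) (a, b)) \<le> height (a, b) (v i)"
    using exists_vertex_height_ge nonneg i\<^sub>0(1) by blast
  then show "arcosh (sqrt (1 + T\<^sup>2)) \<le> hwidth H polygon"
    unfolding ab(2) using vertex_in_polygon T_pos
    by (intro arcosh_le_hwidth[OF convex_body_polygon ab(1,3)]) auto
qed

lemma thickness_less_if_psubset:
  assumes Z: "convex_body Z" "Z \<subset> polygon"
  shows "thickness Z < arcosh (sqrt (1 + T\<^sup>2))"
proof -
  obtain j where j: "j < k" "v j \<notin> Z"
  proof (rule ccontr)
    assume "\<not> thesis"
    then have "v ` {..<k} \<subseteq> Z"
      using that by blast
    then have "polygon \<subseteq> Z"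
      unfolding polygon_def using Z(1) by (intro hull_minimal) (auto simp: convex_body_def)
    then show False
      using Z(2) by auto
  qed
  obtain N where N: "mink N N = 1" "height N (v j) = T" "\<forall>i<k. 0 \<le> height N (v i)"
    "\<forall>i<k. i \<noteq> j \<longrightarrow> height N (v i) < T"
    using opposite_side_normal[OF j(1)] by blast
  have "0 \<le> height N z \<and> height N z < T" if "z \<in> Z" for z
  proof
    have "z \<in> convex hull (v ` {..<k})" "z \<noteq> v j"
      using that Z(2) j(2) by (auto simp: polygon_def)
    then show "0 \<le> height N z"
      using N(3) vertices_subset_hdisk by (intro height_nonneg_on_convex_hull) auto
    show "height N z < T"
      using N(2,4) j(1) T_pos vertices_subset_hdisk \<open>z \<in> convex hull (v ` {..<k})\<close> \<open>z \<noteq> v j\<close>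
      by (intro height_less_on_convex_hull[of "v ` {..<k}" "v j"]) auto
  qed
  then obtain H where H: "supports H Z" "hwidth H Z < arcosh (sqrt (1 + T\<^sup>2))"
    using exists_support_hwidth_less[OF Z(1) vertex[OF j(1)] N(1,2)] by blast
  then show ?thesis
    using thickness_le_hwidth[OF Z(1) H(1)] by simp
qed

lemma reduced_polygon: "reduced polygon"
  unfolding reduced_def
  using convex_body_polygon thickness_less_if_psubset arcosh_le_thickness_polygon by fastforce

end

theorem corollary1:
  fixes k :: nat and P :: "complex set"
  assumes "regular_polygon k P" and "odd k"
  shows "reduced P"
proof -
  obtain c r v where "odd_regular_polygon k c r v" "P = convex hull (v ` {..<k})"
    using assms unfolding regular_polygon_def odd_regular_polygon_def hcircle_def hdisk_def
    by auto
  then show ?thesis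
    using odd_regular_polygon.reduced_polygon odd_regular_polygon.polygon_def by metis
qed

end
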